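(* In the setting below, there is $C_\omega>0$ such that whenever $B$ is a $d_\rho$-ball in $\widehat X$ with center $(x_0,y_0)$ and radius $R>0$ such that $\infty\notin2B$, then for every $(x,y)\in B$: $\omega(x_0,y_0)/C_\omega\le\omega(x,y)\le C_\omega\omega(x_0,y_0)$, $\rho(x_0,y_0)/C_\omega\le\rho(x,y)\le C_\omega\rho(x_0,y_0)$, and $\frac{\rho(x_0,y_0)}{C_\omega}d((x_0,y_0),(x,y))\le d_\rho((x_0,y_0),(x,y))\le C_\omega\rho(x_0,y_0)d((x_0,y_0),(x,y))$; and if in addition $y_0\ge1$ and $y>1$, then $\frac1{C_\omega(\beta-1)}\big|y_0^{1-\beta}-y^{1-\beta}\big|+\frac{d_Z(x,x_0)}{C_\omega y_0^\beta}\le d_\rho((x,y),(x_0,y_0))\le\frac{C_\omega}{\beta-1}\big|y_0^{1-\beta}-y^{1-\beta}\big|+\frac{C_\omega}{y_0^\beta}d_Z(x,x_0)$.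
   Context: Setting: $(Z,d_Z,\mu_Z)$ is a compact doubling metric measure space that is geodesic and supports a $2$-Poincaré inequality. Fix $-1<a<1$ and $\beta>1$. Let $X=Z\times[0,\infty)$ with metric $d((x_1,y_1),(x_2,y_2))=\max\{d_Z(x_1,x_2),|y_1-y_2|\}$ and measure $d\mu_X(x,y)=y^a\,d\mu_Z(x)\,dy$. Set $\rho(x,y)=\min\{1,y^{-\beta}\}$, $\omega(x,y)=\min\{1,y^{-2\beta}\}$, $d_\rho(p_1,p_2)=\inf_\gamma\int_\gamma\rho\,ds$ (infimum over rectifiable curves in $X$ joining $p_1,p_2$), and $\mu_\omega=\omega\,\mu_X$. Let $\widehat X=X\cup\{\infty\}$ with $d_\rho((x,y),\infty)=\int_y^\infty\rho(x,t)\,dt$. For a ball $B$ of center $c$ and radius $R$, $2B$ is the ball of center $c$ and radius $2R$. *)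

theory Defs
  imports "HOL-Analysis.Analysis"
begin

definition curve_length :: "('p \<Rightarrow> 'p \<Rightarrow> real) \<Rightarrow> (real \<Rightarrow> 'p) \<Rightarrow> real \<Rightarrow> real \<Rightarrow> ennreal" where
  "curve_length d \<gamma> a b =
     (SUP ts \<in> {ts. sorted ts \<and> set ts \<subseteq> {a..b}}.
        ennreal (sum_list (map2 (\<lambda>s t. d (\<gamma> s) (\<gamma> t)) ts (tl ts))))"

definition curve_cont :: "('p \<Rightarrow> 'p \<Rightarrow> real) \<Rightarrow> (real \<Rightarrow> 'p) \<Rightarrow> real \<Rightarrow> real \<Rightarrow> bool" where
  "curve_cont d \<gamma> a b \<longleftrightarrow>
     (\<forall>t\<in>{a..b}. \<forall>e>0. \<exists>\<delta>>0. \<forall>s\<in>{a..b}. \<bar>s - t\<bar> < \<delta> \<longrightarrow> d (\<gamma> s) (\<gamma> t) < e)"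

definition rect_curve :: "('p \<Rightarrow> 'p \<Rightarrow> real) \<Rightarrow> 'p set \<Rightarrow> (real \<Rightarrow> 'p) \<Rightarrow> real \<Rightarrow> real \<Rightarrow> bool" where
  "rect_curve d S \<gamma> a b \<longleftrightarrow>
     a \<le> b \<and> curve_cont d \<gamma> a b \<and> \<gamma> ` {a..b} \<subseteq> S \<and> curve_length d \<gamma> a b < \<infinity>"

definition arclen_fun :: "('p \<Rightarrow> 'p \<Rightarrow> real) \<Rightarrow> (real \<Rightarrow> 'p) \<Rightarrow> real \<Rightarrow> real \<Rightarrow> real \<Rightarrow> real" where
  "arclen_fun d \<gamma> a b = (\<lambda>t. enn2real (curve_length d \<gamma> a (max a (min t b))))"

definition line_integral :: "('p \<Rightarrow> 'p \<Rightarrow> real) \<Rightarrow> ('p \<Rightarrow> real) \<Rightarrow> (real \<Rightarrow> 'p) \<Rightarrow> real \<Rightarrow> real \<Rightarrow> ennreal" where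
  "line_integral d g \<gamma> a b =
     (\<integral>\<^sup>+ t \<in> {a..b}. ennreal (g (\<gamma> t)) \<partial>(interval_measure (arclen_fun d \<gamma> a b)))"

definition d_weighted :: "('p \<Rightarrow> 'p \<Rightarrow> real) \<Rightarrow> 'p set \<Rightarrow> ('p \<Rightarrow> real) \<Rightarrow> 'p \<Rightarrow> 'p \<Rightarrow> real" where
  "d_weighted d S g p q =
     enn2real (INF c \<in> {(\<gamma>, a, b). rect_curve d S \<gamma> a b \<and> \<gamma> a = p \<and> \<gamma> b = q}.
                 (case c of (\<gamma>, a, b) \<Rightarrow> line_integral d g \<gamma> a b))"

definition geodesic_space :: "'a::metric_space set \<Rightarrow> bool" where
  "geodesic_space S \<longleftrightarrow>
     (\<forall>p\<in>S. \<forall>q\<in>S. \<exists>\<gamma>. \<gamma> 0 = p \<and> \<gamma> (dist p q) = q \<and> \<gamma> ` {0..dist p q} \<subseteq> S \<and>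
        (\<forall>s\<in>{0..dist p q}. \<forall>t\<in>{0..dist p q}. dist (\<gamma> s) (\<gamma> t) = \<bar>s - t\<bar>))"

definition doubling_measure :: "'a::metric_space measure \<Rightarrow> bool" where
  "doubling_measure \<mu> \<longleftrightarrow>
     sets \<mu> = sets borel \<and>
     (\<forall>x r. r > 0 \<longrightarrow> 0 < emeasure \<mu> (ball x r) \<and> emeasure \<mu> (ball x r) < \<infinity>) \<and>
     (\<exists>C. \<forall>x r. r > 0 \<longrightarrow> emeasure \<mu> (ball x (2 * r)) \<le> ennreal C * emeasure \<mu> (ball x r))"

definition upper_gradient :: "('a::metric_space \<Rightarrow> real) \<Rightarrow> ('a \<Rightarrow> real) \<Rightarrow> bool" where
  "upper_gradient u g \<longleftrightarrow>
     g \<in> borel_measurable borel \<and> (\<forall>x. g x \<ge> 0) \<and>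
     (\<forall>\<gamma> a b. rect_curve dist UNIV \<gamma> a b \<longrightarrow>
        ennreal \<bar>u (\<gamma> a) - u (\<gamma> b)\<bar> \<le> line_integral dist g \<gamma> a b)"

text \<open>(1,2)-Poincare inequality, squared form:
  (avg_B |u - u_B|)^2 \<le> C^2 r^2 avg_{L B} g^2.\<close>
definition supports_2_poincare :: "'a::metric_space measure \<Rightarrow> bool" where
  "supports_2_poincare \<mu> \<longleftrightarrow>
     (\<exists>C>0. \<exists>L\<ge>1. \<forall>u g x r. r > 0 \<and> u \<in> borel_measurable \<mu> \<and> integrable \<mu> u \<and> upper_gradient u g \<longrightarrow>
        (let uB = (LINT y:ball x r|\<mu>. u y) / measure \<mu> (ball x r) in
          ((\<integral>\<^sup>+ y \<in> ball x r. ennreal \<bar>u y - uB\<bar> \<partial>\<mu>) / emeasure \<mu> (ball x r))\<^sup>2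
          \<le> ennreal (C\<^sup>2 * r\<^sup>2) *
             ((\<integral>\<^sup>+ y \<in> ball x (L * r). ennreal ((g y)\<^sup>2) \<partial>\<mu>) / emeasure \<mu> (ball x (L * r)))))"

definition dX :: "('a::metric_space \<times> real) \<Rightarrow> ('a \<times> real) \<Rightarrow> real" where
  "dX p q = max (dist (fst p) (fst q)) \<bar>snd p - snd q\<bar>"

definition Xset :: "('a::metric_space \<times> real) set" where
  "Xset = {p. snd p \<ge> 0}"

text \<open>rho(x,y) = min{1, y^-beta}, omega(x,y) = min{1, y^-2beta} (written by cases to avoid 0 powr).\<close>
definition rho_w :: "real \<Rightarrow> ('a \<times> real) \<Rightarrow> real" where
  "rho_w \<beta> p = (if snd p \<le> 1 then 1 else snd p powr (-\<beta>))"

definition omega_w :: "real \<Rightarrow> ('a \<times> real) \<Rightarrow> real" where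
  "omega_w \<beta> p = (if snd p \<le> 1 then 1 else snd p powr (-2 * \<beta>))"

definition d_rho :: "real \<Rightarrow> ('a::metric_space \<times> real) \<Rightarrow> ('a \<times> real) \<Rightarrow> real" where
  "d_rho \<beta> p q = d_weighted dX Xset (rho_w \<beta>) p q"

definition d_rho_inf :: "real \<Rightarrow> ('a::metric_space \<times> real) \<Rightarrow> real" where
  "d_rho_inf \<beta> p = enn2real (\<integral>\<^sup>+ t \<in> {snd p..}. ennreal (rho_w \<beta> (fst p, t)) \<partial>lborel)"

end

theory Submission
  imports Defs
begin

text \<open>
  Both weights depend only on the height, and \<open>G(h) = \<integral>\<^sub>0\<^sup>h \<rho>\<close> (\<open>rho_primitive\<close>) measures vertical \<open>\<rho>\<close>-distance,
  with \<open>G(\<infinity>) - G(y0)\<close> the distance from height \<open>y0\<close> to \<open>\<infinity>\<close>. A curve rising from height \<open>A\<close> to \<open>B\<close>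
  has \<open>\<rho>\<close>-length at least \<open>q\<^sup>-\<^sup>\<beta> (G(B) - G(A))\<close>: split \<open>[A, B]\<close> into layers whose ends differ by
  a factor at most \<open>q\<close>, on each of which \<open>\<rho>\<close> is at least its value at the top. Since \<open>\<infinity> \<notin> 2B\<close>,
  the radius is at most half of \<open>G(\<infinity>) - G(y0)\<close>, so curves of \<open>\<rho>\<close>-length \<open>< R\<close> from the centre keep
  their height between \<open>max 1 y0 / K\<close> and \<open>K max 1 y0\<close> for a \<open>K\<close> depending only on \<open>\<beta>\<close>; there \<open>\<rho>\<close>
  and \<open>\<omega> = \<rho>\<^sup>2\<close> are comparable to their values at the centre. A straight segment gives the upper
  bound on \<open>d\<^sub>\<rho>\<close>. For the lower bound a curve either stays below height \<open>K\<^sup>2 max 1 y0\<close>, where \<open>\<rho>\<close>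
  is comparable to \<open>\<rho>(y0)\<close>, or climbs above it at a cost that dominates \<open>\<rho>(y0) d\<close> because \<open>Z\<close> is
  bounded. For \<open>y0 \<ge> 1\<close> the vertical term is \<open>G(y) - G(y0) = (y0\<^sup>1\<^sup>-\<^sup>\<beta> - y\<^sup>1\<^sup>-\<^sup>\<beta>)/(\<beta> - 1)\<close>, which is
  comparable to \<open>\<rho>(y0) |y - y0|\<close> by convexity of \<open>t\<^sup>1\<^sup>-\<^sup>\<beta>\<close>.
\<close>

section \<open>The weights as functions of the height\<close>

definition rho_height :: "real \<Rightarrow> real \<Rightarrow> real" where
  "rho_height \<beta> h = (if h \<le> 1 then 1 else h powr (-\<beta>))"

definition rho_primitive :: "real \<Rightarrow> real \<Rightarrow> real" where
  "rho_primitive \<beta> h = (if h \<le> 1 then h else 1 + (1 - h powr (1-\<beta>))/(\<beta>-1))"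

definition rho_primitive_lim :: "real \<Rightarrow> real" where
  "rho_primitive_lim \<beta> = 1 + 1/(\<beta>-1)"

lemma rho_w_eq_rho_height: "rho_w \<beta> p = rho_height \<beta> (snd p)"
  by (simp add: rho_w_def rho_height_def)

lemma omega_w_eq_rho_height: "omega_w \<beta> p = (rho_height \<beta> (snd p))\<^sup>2"
proof -
  have "snd p > 1 \<Longrightarrow> (snd p powr (-\<beta>))\<^sup>2 = snd p powr (-2*\<beta>)"
    by (simp add: powr_powr[symmetric] power2_eq_square powr_add[symmetric])
  then show ?thesis by (auto simp: omega_w_def rho_height_def)
qed

lemma rho_height_eq_powr: "\<beta> \<ge> 0 \<Longrightarrow> rho_height \<beta> h = (max 1 h) powr (-\<beta>)"
  by (auto simp: rho_height_def max_def)

lemma rho_height_pos: "rho_height \<beta> h > 0"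
  by (simp add: rho_height_def)

lemma rho_height_le_1: "\<beta> \<ge> 0 \<Longrightarrow> rho_height \<beta> h \<le> 1"
  by (auto simp: rho_height_def powr_minus_divide intro: ge_one_powr_ge_zero)

lemma rho_height_antimono: "\<beta> \<ge> 0 \<Longrightarrow> h \<le> h' \<Longrightarrow> rho_height \<beta> h' \<le> rho_height \<beta> h"
  unfolding rho_height_eq_powr by (intro powr_mono2') auto

lemma rho_height_min: "\<beta> \<ge> 0 \<Longrightarrow> rho_height \<beta> (min u v) = max (rho_height \<beta> u) (rho_height \<beta> v)"
  using rho_height_antimono[of \<beta> u v] rho_height_antimono[of \<beta> v u] by (auto simp: min_def max_def)

lemma rho_height_measurable[measurable]: "\<beta> \<ge> 0 \<Longrightarrow> rho_height \<beta> \<in> borel_measurable borel"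
proof -
  assume "\<beta> \<ge> 0"
  then have "rho_height \<beta> = (\<lambda>t::real. (max 1 t) powr (-\<beta>))"
    by (simp add: fun_eq_iff rho_height_eq_powr)
  also have "\<dots> \<in> borel_measurable borel"
    by (intro borel_measurable_continuous_onI continuous_intros) auto
  finally show ?thesis .
qed

lemma powr_above_tangent:
  fixes \<beta> h B :: real
  assumes "\<beta> > 1" "0 < h" "0 < B"
  shows "B powr (1-\<beta>) + (\<beta>-1) * B powr (-\<beta>) * (B - h) \<le> h powr (1-\<beta>)"
proof -
  have cv: "convex_on {0<..} (\<lambda>x::real. x powr (1-\<beta>))"
  proof (rule convex_on_realI[where f'="\<lambda>x. (1-\<beta>) * x powr (-\<beta>)"])
    show "connected {0::real<..}" by simp
    fix x :: real assume "x \<in> {0<..}"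
    then show "((\<lambda>x::real. x powr (1-\<beta>)) has_real_derivative (1-\<beta>) * x powr (-\<beta>)) (at x)"
      using has_real_derivative_powr[of x "1-\<beta>"] by simp
  next
    fix x y :: real assume "x \<in> {0<..}" "y \<in> {0<..}" "x \<le> y"
    then have "y powr (-\<beta>) \<le> x powr (-\<beta>)" using assms by (intro powr_mono2') auto
    then show "(1-\<beta>) * x powr (-\<beta>) \<le> (1-\<beta>) * y powr (-\<beta>)" using assms
      by (intro mult_left_mono_neg) auto
  qed
  have "(1-\<beta>) * B powr (-\<beta>) * (h - B) \<le> h powr (1-\<beta>) - B powr (1-\<beta>)"
    using assms has_real_derivative_powr[of B "1-\<beta>"]
    by (intro convex_on_imp_above_tangent[OF cv])
       (auto intro: has_field_derivative_at_within simp: interior_open)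
  then show ?thesis by (simp add: algebra_simps)
qed

lemma rho_primitive_ge_1:
  "\<beta> > 1 \<Longrightarrow> h \<ge> 1 \<Longrightarrow> rho_primitive \<beta> h = rho_primitive_lim \<beta> - h powr (1-\<beta>)/(\<beta>-1)"
  by (cases "h = 1") (auto simp: rho_primitive_def rho_primitive_lim_def diff_divide_distrib)

lemma rho_primitive_lim_minus_ge:
  "\<beta> > 1 \<Longrightarrow> (max 1 h) powr (1-\<beta>)/(\<beta>-1) \<le> rho_primitive_lim \<beta> - rho_primitive \<beta> h"
  by (cases "h \<le> 1") (auto simp: rho_primitive_ge_1 max_def, simp add: rho_primitive_def rho_primitive_lim_def)

lemma rho_primitive_mono:
  fixes \<beta> h B :: real
  assumes "\<beta> > 1" "h \<le> B"
  shows "rho_primitive \<beta> h \<le> rho_primitive \<beta> B"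
proof -
  consider "B \<le> 1" | "h \<le> 1" "1 < B" | "1 < h" by linarith
  then show ?thesis
  proof cases
    case 1 then show ?thesis using assms by (simp add: rho_primitive_def)
  next
    case 2
    have "B powr (1-\<beta>) \<le> B powr 0" using 2 assms by (intro powr_mono) auto
    then have "0 \<le> (1 - B powr (1-\<beta>))/(\<beta>-1)" using 2 assms by simp
    then show ?thesis using 2 by (simp add: rho_primitive_def)
  next
    case 3
    have "B powr (1-\<beta>) \<le> h powr (1-\<beta>)" using 3 assms by (intro powr_mono2') auto
    then show ?thesis using 3 assms by (simp add: rho_primitive_def divide_right_mono)
  qed
qed

lemma rho_primitive_diff_le:
  fixes \<beta> h B :: real
  assumes "\<beta> > 1" "h \<le> B"
  shows "rho_primitive \<beta> B - rho_primitive \<beta> h \<le> rho_height \<beta> h * (B - h)"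
proof -
  consider "B \<le> 1" | "h \<le> 1" "1 < B" | "1 < h" by linarith
  then show ?thesis
  proof cases
    case 1 then show ?thesis using assms by (simp add: rho_primitive_def rho_height_def)
  next
    case 2
    have "1 - B powr (1-\<beta>) \<le> (\<beta>-1) * (B - 1)"
      using powr_above_tangent[of \<beta> B 1] assms 2 by (simp add: algebra_simps)
    then have "(1 - B powr (1-\<beta>))/(\<beta>-1) \<le> B - 1"
      using assms by (simp add: divide_le_eq mult.commute)
    then show ?thesis using 2 by (simp add: rho_primitive_def rho_height_def)
  next
    case 3
    have "h powr (1-\<beta>) - B powr (1-\<beta>) \<le> (\<beta>-1) * (h powr (-\<beta>) * (B - h))"
      using powr_above_tangent[of \<beta> B h] assms 3 by (simp add: algebra_simps)
    then have "(h powr (1-\<beta>) - B powr (1-\<beta>))/(\<beta>-1) \<le> h powr (-\<beta>) * (B - h)"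
      using assms by (simp add: divide_le_eq mult.commute)
    then show ?thesis using 3 assms by (simp add: rho_primitive_def rho_height_def diff_divide_distrib)
  qed
qed

lemma rho_primitive_diff_le_layer:
  fixes \<beta> h B q :: real
  assumes "\<beta> > 1" "q \<ge> 1" "h \<le> B" "max 1 B \<le> q * max 1 h"
  shows "q powr (-\<beta>) * (rho_primitive \<beta> B - rho_primitive \<beta> h) \<le> rho_height \<beta> B * (B - h)"
proof -
  have "q powr (-\<beta>) * rho_height \<beta> h = (q * max 1 h) powr (-\<beta>)"
    using assms by (simp add: rho_height_eq_powr powr_mult)
  also have "\<dots> \<le> rho_height \<beta> B"
    using assms by (simp add: rho_height_eq_powr) (intro powr_mono2', auto)
  finally have "q powr (-\<beta>) * rho_height \<beta> h \<le> rho_height \<beta> B" .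
  moreover have "q powr (-\<beta>) * (rho_primitive \<beta> B - rho_primitive \<beta> h)
      \<le> q powr (-\<beta>) * rho_height \<beta> h * (B - h)"
    using rho_primitive_diff_le[of \<beta> h B] assms by (simp add: mult.assoc mult_left_mono)
  ultimately show ?thesis using assms by (meson diff_ge_0_iff_ge mult_right_mono order_trans)
qed

lemma powr_one_minus_diff_bounds:
  fixes \<beta> K y0 h B :: real
  assumes b: "\<beta> > 1" and K: "K \<ge> 1" and y0: "y0 > 0" and hB: "0 < h" "h \<le> B"
    and l: "y0 / K \<le> h" and u: "B \<le> K * y0"
  shows "(h powr (1-\<beta>) - B powr (1-\<beta>))/(\<beta>-1) \<le> K powr \<beta> * y0 powr (-\<beta>) * (B - h)"
    and "y0 powr (-\<beta>) * (B - h) / K powr \<beta> \<le> (h powr (1-\<beta>) - B powr (1-\<beta>))/(\<beta>-1)"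
proof -
  have "h powr (-\<beta>) \<le> (y0 / K) powr (-\<beta>)" using l y0 K b by (intro powr_mono2') auto
  also have "\<dots> = K powr \<beta> * y0 powr (-\<beta>)" using y0 K by (simp add: powr_divide powr_minus_divide)
  finally have h_le: "h powr (-\<beta>) \<le> K powr \<beta> * y0 powr (-\<beta>)" .
  have "y0 powr (-\<beta>) / K powr \<beta> = (K * y0) powr (-\<beta>)"
    using y0 K by (simp add: powr_mult powr_minus_divide)
  also have "\<dots> \<le> B powr (-\<beta>)" using u hB b by (intro powr_mono2') auto
  finally have B_ge: "y0 powr (-\<beta>) / K powr \<beta> \<le> B powr (-\<beta>)" .
  have "h powr (1-\<beta>) - B powr (1-\<beta>) \<le> (\<beta>-1) * (h powr (-\<beta>) * (B - h))"
    using powr_above_tangent[of \<beta> B h] b hB by (simp add: algebra_simps)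
  also have "\<dots> \<le> (\<beta>-1) * (K powr \<beta> * y0 powr (-\<beta>) * (B - h))"
    using h_le hB b by (intro mult_left_mono mult_right_mono) auto
  finally show "(h powr (1-\<beta>) - B powr (1-\<beta>))/(\<beta>-1) \<le> K powr \<beta> * y0 powr (-\<beta>) * (B - h)"
    using b by (simp add: divide_le_eq mult.commute)
  have "(\<beta>-1) * (y0 powr (-\<beta>) / K powr \<beta> * (B - h)) \<le> (\<beta>-1) * (B powr (-\<beta>) * (B - h))"
    using B_ge hB b by (intro mult_left_mono mult_right_mono) auto
  also have "\<dots> \<le> h powr (1-\<beta>) - B powr (1-\<beta>)"
    using powr_above_tangent[of \<beta> h B] b hB by (simp add: algebra_simps)
  finally show "y0 powr (-\<beta>) * (B - h) / K powr \<beta> \<le> (h powr (1-\<beta>) - B powr (1-\<beta>))/(\<beta>-1)"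
    using b by (simp add: le_divide_eq mult.commute)
qed

lemma abs_powr_one_minus_diff_bounds:
  fixes \<beta> K y0 y :: real
  assumes b: "\<beta> > 1" and K: "K \<ge> 1" and y0: "y0 \<ge> 1" and y: "y > 1"
    and l: "y0 / K \<le> y" and u: "y \<le> K * y0"
  shows "\<bar>y0 powr (1-\<beta>) - y powr (1-\<beta>)\<bar>/(\<beta>-1) \<le> K powr \<beta> * y0 powr (-\<beta>) * \<bar>y - y0\<bar>"
    and "y0 powr (-\<beta>) * \<bar>y - y0\<bar> / K powr \<beta> \<le> \<bar>y0 powr (1-\<beta>) - y powr (1-\<beta>)\<bar>/(\<beta>-1)"
proof -
  have y0K: "y0 / K \<le> y0" "y0 \<le> K * y0"
    using K y0 by (auto simp: divide_le_eq mult_le_cancel_right1)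
  have "\<bar>y0 powr (1-\<beta>) - y powr (1-\<beta>)\<bar>/(\<beta>-1) \<le> K powr \<beta> * y0 powr (-\<beta>) * \<bar>y - y0\<bar> \<and>
        y0 powr (-\<beta>) * \<bar>y - y0\<bar> / K powr \<beta> \<le> \<bar>y0 powr (1-\<beta>) - y powr (1-\<beta>)\<bar>/(\<beta>-1)"
  proof (cases "y \<le> y0")
    case True
    have "y0 powr (1-\<beta>) \<le> y powr (1-\<beta>)" using True y b by (intro powr_mono2') auto
    then show ?thesis
      using powr_one_minus_diff_bounds[OF b K _ _ True l y0K(2)] True y y0 by auto
  next
    case False
    have "y powr (1-\<beta>) \<le> y0 powr (1-\<beta>)" using False y0 b by (intro powr_mono2') auto
    then show ?thesis
      using powr_one_minus_diff_bounds[OF b K _ _ _ y0K(1) u] y y0 False by auto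
  qed
  then show "\<bar>y0 powr (1-\<beta>) - y powr (1-\<beta>)\<bar>/(\<beta>-1) \<le> K powr \<beta> * y0 powr (-\<beta>) * \<bar>y - y0\<bar>"
    and "y0 powr (-\<beta>) * \<bar>y - y0\<bar> / K powr \<beta> \<le> \<bar>y0 powr (1-\<beta>) - y powr (1-\<beta>)\<bar>/(\<beta>-1)"
    by auto
qed

lemma layer_split:
  fixes q A B :: real and n :: nat
  assumes q: "q \<ge> 1" and "0 \<le> A" "A \<le> B" "max 1 B \<le> q ^ Suc n * max 1 A"
  defines "h \<equiv> max A (B/q)"
  shows "A \<le> h" "h \<le> B" "max 1 B \<le> q * max 1 h" "max 1 h \<le> q ^ n * max 1 A"
proof -
  show "A \<le> h" by (simp add: h_def)
  have "B/q \<le> B" using q assms by (simp add: divide_le_eq mult_le_cancel_left1)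
  then show "h \<le> B" using assms by (simp add: h_def)
  have "B = q * (B/q)" using q by simp
  also have "\<dots> \<le> q * max 1 h" using q by (intro mult_left_mono) (auto simp: h_def)
  finally have "B \<le> q * max 1 h" .
  moreover have "1 \<le> q * max 1 h" using q mult_mono[of 1 q 1 "max 1 h"] by simp
  ultimately show "max 1 B \<le> q * max 1 h" by simp
  have qn: "1 \<le> q ^ n" using q by simp
  have "1 * 1 \<le> q ^ n * max 1 A" "1 * max 1 A \<le> q ^ n * max 1 A"
    using qn by (intro mult_mono; simp)+
  then have "1 \<le> q ^ n * max 1 A" "A \<le> q ^ n * max 1 A" by auto
  moreover have "B/q \<le> q ^ n * max 1 A"
    using assms q by (simp add: divide_le_eq mult.commute mult.left_commute)
  ultimately show "max 1 h \<le> q ^ n * max 1 A" by (simp add: h_def)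
qed

lemma ennreal_rho_primitive_diff_split:
  assumes "\<beta> > 1" "A \<le> h" "h \<le> B" "c \<ge> 0"
  shows "ennreal (c * (rho_primitive \<beta> B - rho_primitive \<beta> A))
    = ennreal (c * (rho_primitive \<beta> h - rho_primitive \<beta> A))
      + ennreal (c * (rho_primitive \<beta> B - rho_primitive \<beta> h))"
proof -
  have "rho_primitive \<beta> A \<le> rho_primitive \<beta> h" "rho_primitive \<beta> h \<le> rho_primitive \<beta> B"
    using rho_primitive_mono assms by auto
  then show ?thesis
    using assms by (subst ennreal_plus[symmetric]) (auto simp: algebra_simps intro: mult_left_mono)
qed

section \<open>Length of curves in \<open>X\<close>\<close>

lemma dX_nonneg: "dX p q \<ge> 0"
  by (simp add: dX_def)

lemma dX_commute: "dX p q = dX q p"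
  by (simp add: dX_def dist_commute abs_minus_commute)

lemma dX_self [simp]: "dX p p = 0"
  by (simp add: dX_def)

lemma dX_triangle: "dX p r \<le> dX p q + dX q r"
  unfolding dX_def using dist_triangle[of "fst p" "fst r" "fst q"] by (auto simp: max_def)

lemma abs_snd_le_dX: "\<bar>snd p - snd q\<bar> \<le> dX p q"
  by (simp add: dX_def)

lemma dist_fst_le_dX: "dist (fst p) (fst q) \<le> dX p q"
  by (simp add: dX_def)

lemma dX_le_abs_snd_plus_dist: "dX p q \<le> \<bar>snd p - snd q\<bar> + dist (fst p) (fst q)"
  by (simp add: dX_def)

definition dX_chain :: "(real \<Rightarrow> 'a::metric_space \<times> real) \<Rightarrow> real list \<Rightarrow> real" where
  "dX_chain \<gamma> ts = sum_list (map2 (\<lambda>s t. dX (\<gamma> s) (\<gamma> t)) ts (tl ts))"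

definition partitions :: "real \<Rightarrow> real \<Rightarrow> real list set" where
  "partitions s t = {ts. sorted ts \<and> set ts \<subseteq> {s..t}}"

lemma curve_length_dX_eq_SUP:
  "curve_length dX \<gamma> s t = (SUP ts\<in>partitions s t. ennreal (dX_chain \<gamma> ts))"
  by (simp add: curve_length_def dX_chain_def partitions_def)

lemma dX_chain_simps [simp]:
  "dX_chain \<gamma> [] = 0"
  "dX_chain \<gamma> [x] = 0"
  "dX_chain \<gamma> (x # y # zs) = dX (\<gamma> x) (\<gamma> y) + dX_chain \<gamma> (y # zs)"
  by (simp_all add: dX_chain_def)

lemma dX_chain_Cons:
  "dX_chain \<gamma> (x # xs) = (if xs = [] then 0 else dX (\<gamma> x) (\<gamma> (hd xs)) + dX_chain \<gamma> xs)"
  by (cases xs) auto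

lemma dX_chain_nonneg: "dX_chain \<gamma> xs \<ge> 0"
  by (induction xs) (auto simp: dX_chain_Cons dX_nonneg)

lemma dX_chain_append:
  "dX_chain \<gamma> (A @ B) = dX_chain \<gamma> A + dX_chain \<gamma> B +
     (if A \<noteq> [] \<and> B \<noteq> [] then dX (\<gamma> (last A)) (\<gamma> (hd B)) else 0)"
proof (induction A)
  case (Cons x A)
  then show ?case by (cases A; cases B) (auto simp: dX_chain_Cons)
qed simp

lemma sorted_filter_le_append_filter_gr:
  "sorted xs \<Longrightarrow> filter (\<lambda>x. x \<le> m) xs @ filter (\<lambda>x. m < x) xs = (xs::real list)"
proof (induction xs)
  case (Cons x xs)
  show ?case
  proof (cases "x \<le> m")
    case False
    then have "\<forall>y\<in>set xs. m < y" using Cons.prems by auto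
    then have "filter (\<lambda>x. x \<le> m) xs = []" "filter (\<lambda>x. m < x) xs = xs"
      by (auto simp: filter_empty_conv filter_id_conv)
    then show ?thesis using False by auto
  qed (use Cons in auto)
qed simp

lemma dX_chain_le_insert:
  assumes "sorted xs"
  shows "dX_chain \<gamma> xs
    \<le> dX_chain \<gamma> (filter (\<lambda>x. x \<le> m) xs @ [m]) + dX_chain \<gamma> (m # filter (\<lambda>x. m < x) xs)"
proof -
  define A where "A = filter (\<lambda>x. x \<le> m) xs"
  define B where "B = filter (\<lambda>x. m < x) xs"
  have "dX_chain \<gamma> (A @ B) \<le> dX_chain \<gamma> (A @ [m]) + dX_chain \<gamma> (m # B)"
    using dX_triangle[of "\<gamma> (last A)" "\<gamma> (hd B)" "\<gamma> m"]
      dX_nonneg[of "\<gamma> m" "\<gamma> (hd B)"] dX_nonneg[of "\<gamma> (last A)" "\<gamma> m"]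
    by (auto simp: dX_chain_append dX_chain_Cons[of \<gamma> m B])
  then show ?thesis
    unfolding A_def B_def sorted_filter_le_append_filter_gr[OF assms] .
qed

lemma dX_chain_const: "\<forall>x\<in>set A. x = t0 \<Longrightarrow> dX_chain \<gamma> A = 0"
proof (induction A)
  case (Cons x A)
  then show ?case by (cases A) (auto simp: dX_chain_Cons)
qed simp

lemma dX_chain_const_snoc:
  "\<forall>x\<in>set A. x = t0 \<Longrightarrow> dX_chain \<gamma> (A @ [t]) \<le> dX (\<gamma> t0) (\<gamma> t)"
  using dX_chain_const[of A t0 \<gamma>] dX_nonneg[of "\<gamma> t0" "\<gamma> t"] last_in_set[of A]
  by (auto simp: dX_chain_append)

lemma dX_chain_le_curve_length:
  "ts \<in> partitions s t \<Longrightarrow> ennreal (dX_chain \<gamma> ts) \<le> curve_length dX \<gamma> s t"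
  unfolding curve_length_dX_eq_SUP by (rule SUP_upper)

lemma curve_length_le:
  "(\<And>ts. ts \<in> partitions s t \<Longrightarrow> dX_chain \<gamma> ts \<le> L) \<Longrightarrow> curve_length dX \<gamma> s t \<le> ennreal L"
  unfolding curve_length_dX_eq_SUP by (rule SUP_least) (simp add: ennreal_leI)

lemma curve_length_mono:
  "s \<le> s' \<Longrightarrow> t' \<le> t \<Longrightarrow> curve_length dX \<gamma> s' t' \<le> curve_length dX \<gamma> s t"
  unfolding curve_length_dX_eq_SUP by (rule SUP_subset_mono) (auto simp: partitions_def)

lemma dX_le_curve_length: "s \<le> t \<Longrightarrow> ennreal (dX (\<gamma> s) (\<gamma> t)) \<le> curve_length dX \<gamma> s t"
  using dX_chain_le_curve_length[of "[s,t]" s t \<gamma>] by (simp add: partitions_def)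

lemma curve_length_point: "curve_length dX \<gamma> s s = 0"
proof -
  have "curve_length dX \<gamma> s s \<le> ennreal 0"
    by (rule curve_length_le)
       (auto simp: partitions_def subset_singleton_iff intro: dX_chain_const[of _ s, THEN eq_refl])
  then show ?thesis by simp
qed

lemma curve_length_approx:
  assumes "curve_length dX \<gamma> s t < \<infinity>" "e > 0"
  obtains ts where "ts \<in> partitions s t" "enn2real (curve_length dX \<gamma> s t) - e < dX_chain \<gamma> ts"
proof (cases "enn2real (curve_length dX \<gamma> s t) - e < 0")
  case True
  then show ?thesis by (intro that[of "[]"]) (auto simp: partitions_def)
next
  case False
  let ?L = "curve_length dX \<gamma> s t"
  have "ennreal (enn2real ?L - e) < ennreal (enn2real ?L)"
    using False assms(2) by (subst ennreal_less_iff) auto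
  also have "\<dots> = (SUP ts\<in>partitions s t. ennreal (dX_chain \<gamma> ts))"
    using assms by (simp add: ennreal_enn2real_if curve_length_dX_eq_SUP[symmetric])
  finally obtain ts where "ts \<in> partitions s t" "ennreal (enn2real ?L - e) < ennreal (dX_chain \<gamma> ts)"
    by (auto simp: less_SUP_iff)
  then show ?thesis
    using that ennreal_less_iff[of "enn2real ?L - e" "dX_chain \<gamma> ts"] dX_chain_nonneg[of \<gamma> ts] False
    by auto
qed

lemma curve_length_subadditive:
  assumes "s \<le> m" "m \<le> t"
  shows "curve_length dX \<gamma> s t \<le> curve_length dX \<gamma> s m + curve_length dX \<gamma> m t"
  unfolding curve_length_dX_eq_SUP[of \<gamma> s t]
proof (rule SUP_least)
  fix ts assume ts: "ts \<in> partitions s t"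
  let ?A = "filter (\<lambda>x. x \<le> m) ts @ [m]" and ?B = "m # filter (\<lambda>x. m < x) ts"
  have A: "?A \<in> partitions s m"
    using ts assms by (auto simp: partitions_def sorted_append sorted_wrt_filter)
  have B: "?B \<in> partitions m t"
    using ts assms by (auto simp: partitions_def sorted_wrt_filter)
  have "ennreal (dX_chain \<gamma> ts) \<le> ennreal (dX_chain \<gamma> ?A + dX_chain \<gamma> ?B)"
    using dX_chain_le_insert[of ts \<gamma> m] ts by (intro ennreal_leI) (auto simp: partitions_def)
  also have "\<dots> = ennreal (dX_chain \<gamma> ?A) + ennreal (dX_chain \<gamma> ?B)"
    by (rule ennreal_plus[OF dX_chain_nonneg dX_chain_nonneg])
  also have "\<dots> \<le> curve_length dX \<gamma> s m + curve_length dX \<gamma> m t"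
    by (intro add_mono dX_chain_le_curve_length A B)
  finally show "ennreal (dX_chain \<gamma> ts) \<le> curve_length dX \<gamma> s m + curve_length dX \<gamma> m t" .
qed

lemma curve_length_superadditive:
  assumes "s \<le> m" "m \<le> t" "curve_length dX \<gamma> s t < \<infinity>"
  shows "enn2real (curve_length dX \<gamma> s m) + enn2real (curve_length dX \<gamma> m t)
          \<le> enn2real (curve_length dX \<gamma> s t)"
proof (rule field_le_epsilon)
  fix e :: real assume e: "e > 0"
  have "curve_length dX \<gamma> s m < \<infinity>" "curve_length dX \<gamma> m t < \<infinity>"
    using curve_length_mono[of s s m t \<gamma>] curve_length_mono[of s m t t \<gamma>] assms by auto
  then obtain P1 P2 where P1: "P1 \<in> partitions s m" "enn2real (curve_length dX \<gamma> s m) - e/2 < dX_chain \<gamma> P1"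
    and P2: "P2 \<in> partitions m t" "enn2real (curve_length dX \<gamma> m t) - e/2 < dX_chain \<gamma> P2"
    using curve_length_approx[of \<gamma> _ _ "e/2"] e by (metis half_gt_zero)
  have "\<forall>x\<in>set P1. \<forall>y\<in>set P2. x \<le> y" using P1(1) P2(1) by (force simp: partitions_def)
  then have P: "P1 @ P2 \<in> partitions s t"
    using P1 P2 assms by (auto simp: partitions_def sorted_append)
  have "dX_chain \<gamma> P1 + dX_chain \<gamma> P2 \<le> dX_chain \<gamma> (P1 @ P2)"
    by (simp add: dX_chain_append dX_nonneg)
  also have "\<dots> \<le> enn2real (curve_length dX \<gamma> s t)"
    using enn2real_mono[OF dX_chain_le_curve_length[OF P, of \<gamma>]] assms(3) dX_chain_nonneg[of \<gamma> "P1 @ P2"]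
    by simp
  finally show "enn2real (curve_length dX \<gamma> s m) + enn2real (curve_length dX \<gamma> m t)
      \<le> enn2real (curve_length dX \<gamma> s t) + e"
    using P1 P2 by linarith
qed

lemma dX_le_curve_length_real:
  assumes "s \<le> t" "curve_length dX \<gamma> s t < \<infinity>"
  shows "dX (\<gamma> s) (\<gamma> t) \<le> enn2real (curve_length dX \<gamma> s t)"
  using enn2real_mono[OF dX_le_curve_length[OF assms(1), of \<gamma>]] assms(2) dX_nonneg[of "\<gamma> s" "\<gamma> t"]
  by simp

lemma curve_length_finite:
  "rect_curve dX S \<gamma> a b \<Longrightarrow> a \<le> s \<Longrightarrow> t \<le> b \<Longrightarrow> curve_length dX \<gamma> s t < \<infinity>"
  using curve_length_mono[of a s t b \<gamma>] by (auto simp: rect_curve_def)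

lemma arclen_fun_mono:
  assumes r: "rect_curve dX S \<gamma> a b" and "u \<le> w"
  shows "arclen_fun dX \<gamma> a b u \<le> arclen_fun dX \<gamma> a b w"
proof -
  have "a \<le> b" using r by (simp add: rect_curve_def)
  then have "curve_length dX \<gamma> a (max a (min w b)) < \<infinity>"
    by (intro curve_length_finite[OF r]) auto
  then show ?thesis
    unfolding arclen_fun_def using assms by (intro enn2real_mono curve_length_mono) auto
qed

lemma dX_chain_le_step_plus_curve_length:
  assumes P: "P \<in> partitions t0 b" and t: "t0 < t" "t \<le> b"
    and gap: "\<forall>x\<in>set P. x \<le> t \<longrightarrow> x = t0" and fin: "curve_length dX \<gamma> t b < \<infinity>"
  shows "dX_chain \<gamma> P \<le> dX (\<gamma> t0) (\<gamma> t) + enn2real (curve_length dX \<gamma> t b)"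
proof -
  have "sorted P" using P by (simp add: partitions_def)
  then have "dX_chain \<gamma> P
      \<le> dX_chain \<gamma> (filter (\<lambda>x. x \<le> t) P @ [t]) + dX_chain \<gamma> (t # filter (\<lambda>x. t < x) P)"
    by (rule dX_chain_le_insert)
  also have "dX_chain \<gamma> (filter (\<lambda>x. x \<le> t) P @ [t]) \<le> dX (\<gamma> t0) (\<gamma> t)"
    using gap by (intro dX_chain_const_snoc) auto
  also have "t # filter (\<lambda>x. t < x) P \<in> partitions t b"
    using P t by (auto simp: partitions_def sorted_wrt_filter)
  then have "enn2real (ennreal (dX_chain \<gamma> (t # filter (\<lambda>x. t < x) P)))
      \<le> enn2real (curve_length dX \<gamma> t b)"
    using fin by (intro enn2real_mono dX_chain_le_curve_length) auto
  then have "dX_chain \<gamma> (t # filter (\<lambda>x. t < x) P) \<le> enn2real (curve_length dX \<gamma> t b)"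
    by (simp add: dX_chain_nonneg)
  finally show ?thesis by simp
qed

lemma curve_length_small_at_right:
  assumes r: "rect_curve dX S \<gamma> a b" and t0: "a \<le> t0" "t0 < b" and e: "e > 0"
  obtains t where "t0 < t" "t \<le> b" "enn2real (curve_length dX \<gamma> t0 t) < e"
proof -
  let ?l = "\<lambda>s t. enn2real (curve_length dX \<gamma> s t)"
  have fin: "curve_length dX \<gamma> t0 b < \<infinity>" using t0 by (intro curve_length_finite[OF r]) auto
  obtain P where P: "P \<in> partitions t0 b" "?l t0 b - e/2 < dX_chain \<gamma> P"
    using curve_length_approx[OF fin, of "e/2"] e by auto
  have "curve_cont dX \<gamma> a b" "t0 \<in> {a..b}" "e/2 > 0" using r t0 e by (auto simp: rect_curve_def)
  then obtain d1 where d1: "d1 > 0" "\<forall>s\<in>{a..b}. \<bar>s - t0\<bar> < d1 \<longrightarrow> dX (\<gamma> s) (\<gamma> t0) < e/2"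
    unfolding curve_cont_def by blast
  \<comment> \<open>\<open>d2\<close> keeps \<open>(t0, t0 + d2)\<close> free of partition points and inside \<open>[a, b]\<close>\<close>
  define d2 where "d2 = Min (insert (b - t0) {x - t0 | x. x \<in> set P \<and> x > t0})"
  have d2: "d2 > 0" "d2 \<le> b - t0" "\<And>x. x \<in> set P \<Longrightarrow> x > t0 \<Longrightarrow> d2 \<le> x - t0"
    using t0 by (auto simp: d2_def)
  define t where "t = t0 + min (d1/2) (d2/2)"
  have t: "t0 < t" "t \<le> b" "\<bar>t - t0\<bar> < d1" using d1 d2 by (auto simp: t_def)
  have gap: "\<forall>x\<in>set P. x \<le> t \<longrightarrow> x = t0"
  proof (intro ballI impI)
    fix x assume x: "x \<in> set P" "x \<le> t"
    have "t0 \<le> x" using x P(1) by (auto simp: partitions_def)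
    then show "x = t0" using d2(3)[OF x(1)] x(2) d2(1) by (fastforce simp: t_def)
  qed
  have "a \<le> t" using t assms(2) by linarith
  then have "t \<in> {a..b}" using t by auto
  then have "dX (\<gamma> t) (\<gamma> t0) < e/2" using d1(2) t by auto
  then have "dX (\<gamma> t0) (\<gamma> t) < e/2" by (simp add: dX_commute)
  moreover have "dX_chain \<gamma> P \<le> dX (\<gamma> t0) (\<gamma> t) + ?l t b"
    using \<open>a \<le> t\<close> by (intro dX_chain_le_step_plus_curve_length[OF P(1) t(1,2) gap] curve_length_finite[OF r]) auto
  ultimately have "?l t0 b - e < ?l t b" using P(2) by linarith
  moreover have "?l t0 t + ?l t b \<le> ?l t0 b"
    using t fin by (intro curve_length_superadditive) auto
  ultimately show ?thesis using t by (intro that) auto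
qed

lemma arclen_fun_continuous_at_right:
  assumes r: "rect_curve dX S \<gamma> a b"
  shows "continuous (at_right t0) (arclen_fun dX \<gamma> a b)"
proof (subst continuous_at_right_real_increasing)
  show "\<And>x y. x \<le> y \<Longrightarrow> arclen_fun dX \<gamma> a b x \<le> arclen_fun dX \<gamma> a b y"
    using arclen_fun_mono[OF r] by auto
  have ab: "a \<le> b" using r by (simp add: rect_curve_def)
  show "\<forall>e>0. \<exists>d>0. arclen_fun dX \<gamma> a b (t0 + d) - arclen_fun dX \<gamma> a b t0 < e"
  proof (intro allI impI)
    fix e :: real assume e: "e > 0"
    consider "t0 < a" | "a \<le> t0" "t0 < b" | "b \<le> t0" by linarith
    then show "\<exists>d>0. arclen_fun dX \<gamma> a b (t0 + d) - arclen_fun dX \<gamma> a b t0 < e"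
    proof cases
      case 1
      then show ?thesis using e ab
        by (intro exI[of _ "a - t0"]) (auto simp: arclen_fun_def curve_length_point)
    next
      case 2
      then obtain t where t: "t0 < t" "t \<le> b" "enn2real (curve_length dX \<gamma> t0 t) < e"
        using curve_length_small_at_right[OF r _ _ e] by blast
      have "curve_length dX \<gamma> a t \<le> curve_length dX \<gamma> a t0 + curve_length dX \<gamma> t0 t"
        using 2 t by (intro curve_length_subadditive) auto
      moreover have "curve_length dX \<gamma> a t0 < \<infinity>" "curve_length dX \<gamma> t0 t < \<infinity>"
        using 2 t curve_length_finite[OF r, of a t0] curve_length_finite[OF r, of t0 t] by auto
      ultimately have "enn2real (curve_length dX \<gamma> a t)
          \<le> enn2real (curve_length dX \<gamma> a t0) + enn2real (curve_length dX \<gamma> t0 t)"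
        by (simp add: enn2real_mono flip: enn2real_plus)
      then show ?thesis using 2 t
        by (intro exI[of _ "t - t0"]) (auto simp: arclen_fun_def max_def min_def)
    next
      case 3
      then show ?thesis using e ab
        by (intro exI[of _ 1]) (auto simp: arclen_fun_def max_def min_def)
    qed
  qed
qed

lemma emeasure_arclen_Ioc:
  assumes r: "rect_curve dX S \<gamma> a b" and "u \<le> w"
  shows "emeasure (interval_measure (arclen_fun dX \<gamma> a b)) {u<..w}
     = ennreal (arclen_fun dX \<gamma> a b w - arclen_fun dX \<gamma> a b u)"
  using assms
  by (intro emeasure_interval_measure_Ioc arclen_fun_continuous_at_right[OF r] arclen_fun_mono[OF r])
     auto

lemma dX_le_arclen_fun_diff:
  assumes r: "rect_curve dX S \<gamma> a b" and "a \<le> u" "u \<le> w" "w \<le> b"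
  shows "dX (\<gamma> u) (\<gamma> w) \<le> arclen_fun dX \<gamma> a b w - arclen_fun dX \<gamma> a b u"
proof -
  let ?l = "\<lambda>s t. enn2real (curve_length dX \<gamma> s t)"
  have "dX (\<gamma> u) (\<gamma> w) \<le> ?l u w"
    using assms by (intro dX_le_curve_length_real curve_length_finite[OF r]) auto
  moreover have "?l a u + ?l u w \<le> ?l a w"
    using assms by (intro curve_length_superadditive curve_length_finite[OF r]) auto
  ultimately show ?thesis using assms by (simp add: arclen_fun_def max_def min_def)
qed

section \<open>The \<open>\<rho>\<close>-length along a curve\<close>

locale X_curve =
  fixes \<gamma> :: "real \<Rightarrow> 'a::metric_space \<times> real" and a b \<beta> :: real
  assumes rect: "rect_curve dX Xset \<gamma> a b" and beta: "\<beta> > 1"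
begin

abbreviation height :: "real \<Rightarrow> real" where
  "height t \<equiv> snd (\<gamma> t)"

abbreviation arclen_measure :: "real measure" where
  "arclen_measure \<equiv> interval_measure (arclen_fun dX \<gamma> a b)"

definition rho_along :: "real \<Rightarrow> real" where
  "rho_along t = indicator {a..b} t * rho_w \<beta> (\<gamma> t)"

definition rho_cost :: "real \<Rightarrow> real \<Rightarrow> ennreal" where
  "rho_cost u w = (\<integral>\<^sup>+ t. ennreal (rho_along t) * indicator {u<..w} t \<partial>arclen_measure)"

lemma le_endpoints: "a \<le> b"
  using rect by (simp add: rect_curve_def)

lemma height_continuous: "continuous_on {a..b} height"
  unfolding continuous_on_iff
proof (intro ballI allI impI)
  fix t e :: real assume t: "t \<in> {a..b}" and e: "e > 0"
  have "curve_cont dX \<gamma> a b" using rect by (simp add: rect_curve_def)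
  then obtain d where d: "d > 0" "\<forall>s\<in>{a..b}. \<bar>s - t\<bar> < d \<longrightarrow> dX (\<gamma> s) (\<gamma> t) < e"
    using t e unfolding curve_cont_def by blast
  have "dist (height s) (height t) < e" if "s \<in> {a..b}" "dist s t < d" for s
    using d that abs_snd_le_dX[of "\<gamma> s" "\<gamma> t"] by (force simp: dist_real_def)
  then show "\<exists>d>0. \<forall>s\<in>{a..b}. dist s t < d \<longrightarrow> dist (height s) (height t) < e"
    using d(1) by blast
qed

lemma rho_along_measurable [measurable]: "rho_along \<in> borel_measurable borel"
proof -
  have "continuous_on {a..b} (\<lambda>t. (max 1 (height t)) powr (-\<beta>))"
    by (intro continuous_intros height_continuous) auto
  then have "continuous_on {a..b} (\<lambda>t. rho_w \<beta> (\<gamma> t))"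
    using beta by (simp add: rho_w_eq_rho_height rho_height_eq_powr)
  then have "(\<lambda>t. indicator {a..b} t *\<^sub>R rho_w \<beta> (\<gamma> t)) \<in> borel_measurable borel"
    by (intro borel_measurable_continuous_on_indicator) auto
  then show ?thesis by (simp add: rho_along_def[abs_def])
qed

lemma rho_cost_ge_layer:
  assumes "a \<le> u" "u \<le> w" "w \<le> b" "0 \<le> m" "\<And>t. t \<in> {u<..w} \<Longrightarrow> m \<le> rho_w \<beta> (\<gamma> t)"
  shows "ennreal (m * dX (\<gamma> u) (\<gamma> w)) \<le> rho_cost u w"
proof -
  have "ennreal (m * dX (\<gamma> u) (\<gamma> w)) = ennreal m * ennreal (dX (\<gamma> u) (\<gamma> w))"
    using assms dX_nonneg[of "\<gamma> u" "\<gamma> w"] by (simp add: ennreal_mult)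
  also have "\<dots> \<le> ennreal m * ennreal (arclen_fun dX \<gamma> a b w - arclen_fun dX \<gamma> a b u)"
    using dX_le_arclen_fun_diff[OF rect, of u w] assms by (intro mult_left_mono ennreal_leI) auto
  also have "\<dots> = ennreal m * emeasure arclen_measure {u<..w}"
    using emeasure_arclen_Ioc[OF rect, of u w] assms by simp
  also have "\<dots> = (\<integral>\<^sup>+ t. ennreal m * indicator {u<..w} t \<partial>arclen_measure)"
    by (simp add: nn_integral_cmult_indicator)
  also have "\<dots> \<le> rho_cost u w"
    unfolding rho_cost_def
    using assms by (intro nn_integral_mono) (auto simp: rho_along_def intro: ennreal_leI split: split_indicator)
  finally show ?thesis .
qed

lemma rho_cost_add_le:
  assumes "s \<le> u" "u \<le> w" "w \<le> T"
  shows "rho_cost s u + rho_cost u w \<le> rho_cost s T"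
proof -
  have "rho_cost s u + rho_cost u w
      = (\<integral>\<^sup>+ t. ennreal (rho_along t) * indicator {s<..u} t
                + ennreal (rho_along t) * indicator {u<..w} t \<partial>arclen_measure)"
    unfolding rho_cost_def by (rule nn_integral_add[symmetric]) auto
  also have "\<dots> \<le> rho_cost s T"
    unfolding rho_cost_def using assms by (intro nn_integral_mono) (auto split: split_indicator)
  finally show ?thesis .
qed

lemma rho_cost_mono: "s \<le> s' \<Longrightarrow> T' \<le> T \<Longrightarrow> rho_cost s' T' \<le> rho_cost s T"
  unfolding rho_cost_def
  by (intro nn_integral_mono) (auto split: split_indicator intro: mult_left_mono)

lemma rho_cost_le_line_integral: "rho_cost a b \<le> line_integral dX (rho_w \<beta>) \<gamma> a b"
  unfolding rho_cost_def line_integral_def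
  by (intro nn_integral_mono) (auto simp: rho_along_def split: split_indicator)

lemma rho_cost_ge_crossing:
  assumes "a \<le> u" "u \<le> w" "w \<le> b" "\<And>t. t \<in> {u<..w} \<Longrightarrow> height t \<le> B"
    and "B - h \<le> \<bar>height u - height w\<bar>" "q \<ge> 1" "h \<le> B" "max 1 B \<le> q * max 1 h"
  shows "ennreal (q powr (-\<beta>) * (rho_primitive \<beta> B - rho_primitive \<beta> h)) \<le> rho_cost u w"
proof -
  have "q powr (-\<beta>) * (rho_primitive \<beta> B - rho_primitive \<beta> h) \<le> rho_height \<beta> B * (B - h)"
    using rho_primitive_diff_le_layer[of \<beta> q h B] beta assms by auto
  also have "\<dots> \<le> rho_height \<beta> B * dX (\<gamma> u) (\<gamma> w)"
    using abs_snd_le_dX[of "\<gamma> u" "\<gamma> w"] assms rho_height_pos[of \<beta> B]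
    by (intro mult_left_mono) auto
  also have "ennreal \<dots> \<le> rho_cost u w"
    using assms rho_height_pos[of \<beta> B] beta
    by (intro rho_cost_ge_layer) (auto simp: less_imp_le rho_w_eq_rho_height rho_height_antimono)
  finally show ?thesis by (simp add: ennreal_leI order_trans)
qed

lemma ascent_crossing:
  assumes "a \<le> s" "s \<le> T" "T \<le> b" "height s \<le> h" "h \<le> B" "B \<le> height T"
  obtains u w where "s \<le> u" "u \<le> w" "w \<le> T" "height u = h" "height w = B"
    "\<And>t. t \<in> {u<..w} \<Longrightarrow> height t \<le> B"
proof -
  have hc: "continuous_on {s..T} height"
    using height_continuous by (rule continuous_on_subset) (use assms in auto)
  define K where "K = {s..T} \<inter> height -` {B..}"
  have "closed K" unfolding K_def by (intro continuous_closed_preimage hc) auto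
  moreover have "T \<in> K" "bdd_below K" using assms by (auto simp: K_def intro: bdd_belowI[of _ s])
  ultimately have w0K: "Inf K \<in> K" using closed_contains_Inf by blast
  define w0 where "w0 = Inf K"
  have w0: "s \<le> w0" "w0 \<le> T" "B \<le> height w0" using w0K by (auto simp: K_def w0_def)
  \<comment> \<open>\<open>w0\<close> is the first time the height reaches \<open>B\<close>\<close>
  have below: "height t < B" if "s \<le> t" "t < w0" for t
    using that w0 cInf_lower[of t K] \<open>bdd_below K\<close> by (force simp: K_def w0_def)
  obtain w where w: "s \<le> w" "w \<le> w0" "height w = B"
    using IVT'[of height s B w0] w0 assms continuous_on_subset[OF hc, of "{s..w0}"] by auto
  obtain u where u: "s \<le> u" "u \<le> w" "height u = h"
    using IVT'[of height s h w] w w0 assms continuous_on_subset[OF hc, of "{s..w}"] by auto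
  have "height t \<le> B" if "t \<in> {u<..w}" for t
    using that below[of t] u w by (cases "t = w") auto
  then show ?thesis using u w w0 by (intro that[where u=u and w=w]) auto
qed

lemma descent_crossing:
  assumes "a \<le> s" "s \<le> T" "T \<le> b" "height T \<le> h" "h \<le> B" "B \<le> height s"
  obtains u w where "s \<le> w" "w \<le> u" "u \<le> T" "height u = h" "height w = B"
    "\<And>t. t \<in> {w<..u} \<Longrightarrow> height t \<le> B"
proof -
  have hc: "continuous_on {s..T} height"
    using height_continuous by (rule continuous_on_subset) (use assms in auto)
  define K where "K = {s..T} \<inter> height -` {B..}"
  have "closed K" unfolding K_def by (intro continuous_closed_preimage hc) auto
  moreover have "s \<in> K" "bdd_above K" using assms by (auto simp: K_def intro: bdd_aboveI[of _ T])
  ultimately have w0K: "Sup K \<in> K" using closed_contains_Sup by blast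
  define w0 where "w0 = Sup K"
  have w0: "s \<le> w0" "w0 \<le> T" "B \<le> height w0" using w0K by (auto simp: K_def w0_def)
  \<comment> \<open>\<open>w0\<close> is the last time the height is at least \<open>B\<close>\<close>
  have above: "height t < B" if "w0 < t" "t \<le> T" for t
    using that w0 cSup_upper[of t K] \<open>bdd_above K\<close> by (force simp: K_def w0_def)
  obtain w where w: "w0 \<le> w" "w \<le> T" "height w = B"
    using IVT2'[of height T B w0] w0 assms continuous_on_subset[OF hc, of "{w0..T}"] by auto
  obtain u where u: "w \<le> u" "u \<le> T" "height u = h"
    using IVT2'[of height T h w] w w0 assms continuous_on_subset[OF hc, of "{w..T}"] by auto
  have "height t \<le> B" if "t \<in> {w<..u}" for t
    using that above[of t] u w by auto
  then show ?thesis using u w w0 by (intro that[where u=u and w=w]) auto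
qed

text \<open>Induction on the number \<open>n\<close> of layers of ratio \<open>q\<close> needed to cover \<open>[A, B]\<close>; \<open>layer_split\<close>
  peels off the top layer.\<close>

lemma rho_cost_ge_ascent_layers:
  assumes q: "q > 1"
  shows "0 \<le> A \<Longrightarrow> A \<le> B \<Longrightarrow> max 1 B \<le> q ^ n * max 1 A \<Longrightarrow> a \<le> s \<Longrightarrow> s \<le> T \<Longrightarrow> T \<le> b
    \<Longrightarrow> height s \<le> A \<Longrightarrow> B \<le> height T
    \<Longrightarrow> ennreal (q powr (-\<beta>) * (rho_primitive \<beta> B - rho_primitive \<beta> A)) \<le> rho_cost s T"
proof (induction n arbitrary: A B s T)
  case 0
  have "max 1 B \<le> max 1 A" using 0(3) by (simp only: power_0 mult_1)
  also have "\<dots> \<le> q * max 1 A" using q mult_right_mono[of 1 q "max 1 A"] by simp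
  finally have layer: "max 1 B \<le> q * max 1 A" .
  obtain u w where uw: "s \<le> u" "u \<le> w" "w \<le> T" "height u = A" "height w = B"
    "\<And>t. t \<in> {u<..w} \<Longrightarrow> height t \<le> B"
    using ascent_crossing[OF 0(4,5,6,7,2,8)] by blast
  have "ennreal (q powr (-\<beta>) * (rho_primitive \<beta> B - rho_primitive \<beta> A)) \<le> rho_cost u w"
    using uw(6) q 0(2) layer uw(1-5) 0(4,6) by (intro rho_cost_ge_crossing) simp_all
  also have "\<dots> \<le> rho_cost s T" using uw(1,3) by (rule rho_cost_mono)
  finally show ?case .
next
  case (Suc n)
  define h where "h = max A (B/q)"
  have hf: "A \<le> h" "h \<le> B" "max 1 B \<le> q * max 1 h" "max 1 h \<le> q ^ n * max 1 A"
    using layer_split[of q A B n] Suc.prems(1-3) q by (simp_all add: h_def)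
  have "height s \<le> h" using Suc.prems(7) hf(1) by linarith
  then obtain u w where uw: "s \<le> u" "u \<le> w" "w \<le> T" "height u = h" "height w = B"
    "\<And>t. t \<in> {u<..w} \<Longrightarrow> height t \<le> B"
    using ascent_crossing[OF Suc.prems(4-6) _ hf(2) Suc.prems(8)] by blast
  have "ennreal (q powr (-\<beta>) * (rho_primitive \<beta> B - rho_primitive \<beta> A))
      = ennreal (q powr (-\<beta>) * (rho_primitive \<beta> h - rho_primitive \<beta> A))
        + ennreal (q powr (-\<beta>) * (rho_primitive \<beta> B - rho_primitive \<beta> h))"
    using hf beta by (intro ennreal_rho_primitive_diff_split) auto
  also have "\<dots> \<le> rho_cost s u + rho_cost u w"
  proof (rule add_mono)
    show "ennreal (q powr (-\<beta>) * (rho_primitive \<beta> h - rho_primitive \<beta> A)) \<le> rho_cost s u"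
      using Suc.prems(1,4,6,7) Suc.IH[of A h s u] hf uw(1-4) by simp
    show "ennreal (q powr (-\<beta>) * (rho_primitive \<beta> B - rho_primitive \<beta> h)) \<le> rho_cost u w"
      using uw(6) q hf(2,3) uw(1-5) Suc.prems(4,6) by (intro rho_cost_ge_crossing) simp_all
  qed
  also have "\<dots> \<le> rho_cost s T" using uw by (intro rho_cost_add_le) auto
  finally show ?case .
qed

lemma rho_cost_ge_ascent:
  assumes q: "q > 1" and "0 \<le> A" "A \<le> B" "a \<le> s" "s \<le> T" "T \<le> b" "height s \<le> A" "B \<le> height T"
  shows "ennreal (q powr (-\<beta>) * (rho_primitive \<beta> B - rho_primitive \<beta> A)) \<le> rho_cost s T"
proof -
  obtain n where "max 1 B / max 1 A < q ^ n" using real_arch_pow[OF q] by blast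
  then have "max 1 B \<le> q ^ n * max 1 A"
    using pos_divide_less_eq[of "max 1 A" "max 1 B" "q ^ n"] by simp
  then show ?thesis using rho_cost_ge_ascent_layers[OF q] assms by blast
qed

lemma rho_cost_ge_descent_layers:
  assumes q: "q > 1"
  shows "0 \<le> A \<Longrightarrow> A \<le> B \<Longrightarrow> max 1 B \<le> q ^ n * max 1 A \<Longrightarrow> a \<le> s \<Longrightarrow> s \<le> T \<Longrightarrow> T \<le> b
    \<Longrightarrow> B \<le> height s \<Longrightarrow> height T \<le> A
    \<Longrightarrow> ennreal (q powr (-\<beta>) * (rho_primitive \<beta> B - rho_primitive \<beta> A)) \<le> rho_cost s T"
proof (induction n arbitrary: A B s T)
  case 0
  have "max 1 B \<le> max 1 A" using 0(3) by (simp only: power_0 mult_1)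
  also have "\<dots> \<le> q * max 1 A" using q mult_right_mono[of 1 q "max 1 A"] by simp
  finally have layer: "max 1 B \<le> q * max 1 A" .
  obtain u w where uw: "s \<le> w" "w \<le> u" "u \<le> T" "height u = A" "height w = B"
    "\<And>t. t \<in> {w<..u} \<Longrightarrow> height t \<le> B"
    using descent_crossing[OF 0(4,5,6,8,2,7)] by blast
  have "ennreal (q powr (-\<beta>) * (rho_primitive \<beta> B - rho_primitive \<beta> A)) \<le> rho_cost w u"
    using uw(6) q 0(2) layer uw(1-5) 0(4,6) by (intro rho_cost_ge_crossing) simp_all
  also have "\<dots> \<le> rho_cost s T" using uw(1,3) by (rule rho_cost_mono)
  finally show ?case .
next
  case (Suc n)
  define h where "h = max A (B/q)"
  have hf: "A \<le> h" "h \<le> B" "max 1 B \<le> q * max 1 h" "max 1 h \<le> q ^ n * max 1 A"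
    using layer_split[of q A B n] Suc.prems(1-3) q by (simp_all add: h_def)
  have "height T \<le> h" using Suc.prems(8) hf(1) by linarith
  then obtain u w where uw: "s \<le> w" "w \<le> u" "u \<le> T" "height u = h" "height w = B"
    "\<And>t. t \<in> {w<..u} \<Longrightarrow> height t \<le> B"
    using descent_crossing[OF Suc.prems(4-6) _ hf(2) Suc.prems(7)] by blast
  have "ennreal (q powr (-\<beta>) * (rho_primitive \<beta> B - rho_primitive \<beta> A))
      = ennreal (q powr (-\<beta>) * (rho_primitive \<beta> B - rho_primitive \<beta> h))
        + ennreal (q powr (-\<beta>) * (rho_primitive \<beta> h - rho_primitive \<beta> A))"
    using hf ennreal_rho_primitive_diff_split[OF beta, of A h B "q powr (-\<beta>)"] by (simp add: add.commute)
  also have "\<dots> \<le> rho_cost w u + rho_cost u T"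
  proof (rule add_mono)
    show "ennreal (q powr (-\<beta>) * (rho_primitive \<beta> B - rho_primitive \<beta> h)) \<le> rho_cost w u"
      using uw(6) q hf(2,3) uw(1-5) Suc.prems(4,6) by (intro rho_cost_ge_crossing) simp_all
    show "ennreal (q powr (-\<beta>) * (rho_primitive \<beta> h - rho_primitive \<beta> A)) \<le> rho_cost u T"
      using Suc.prems(1,4,6,8) Suc.IH[of A h u T] hf uw(1-4) by simp
  qed
  also have "\<dots> \<le> rho_cost w T" using uw by (intro rho_cost_add_le) auto
  also have "\<dots> \<le> rho_cost s T" using uw by (intro rho_cost_mono) auto
  finally show ?case .
qed

lemma rho_cost_ge_descent:
  assumes q: "q > 1" and "0 \<le> A" "A \<le> B" "a \<le> s" "s \<le> T" "T \<le> b" "B \<le> height s" "height T \<le> A"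
  shows "ennreal (q powr (-\<beta>) * (rho_primitive \<beta> B - rho_primitive \<beta> A)) \<le> rho_cost s T"
proof -
  obtain n where "max 1 B / max 1 A < q ^ n" using real_arch_pow[OF q] by blast
  then have "max 1 B \<le> q ^ n * max 1 A"
    using pos_divide_less_eq[of "max 1 A" "max 1 B" "q ^ n"] by simp
  then show ?thesis using rho_cost_ge_descent_layers[OF q] assms by blast
qed

end

section \<open>Straight segments and the distance \<open>d_rho\<close>\<close>

lemma dX_chain_isometric:
  assumes iso: "\<forall>s\<in>{lo..hi}. \<forall>t\<in>{lo..hi}. dX (\<gamma> s) (\<gamma> t) = \<bar>s - t\<bar>"
  shows "sorted ts \<Longrightarrow> set ts \<subseteq> {lo..hi} \<Longrightarrow> dX_chain \<gamma> ts = (if ts = [] then 0 else last ts - hd ts)"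
proof (induction ts)
  case (Cons x xs)
  show ?case
  proof (cases "xs = []")
    case False
    have "x \<le> hd xs" using Cons.prems False by (cases xs) auto
    moreover have "hd xs \<in> set xs" using False by simp
    then have "dX (\<gamma> x) (\<gamma> (hd xs)) = \<bar>x - hd xs\<bar>" using iso Cons.prems by auto
    ultimately show ?thesis using Cons False by (auto simp: dX_chain_Cons)
  qed simp
qed simp

lemma curve_length_isometric:
  assumes iso: "\<forall>s\<in>{lo..hi}. \<forall>t\<in>{lo..hi}. dX (\<gamma> s) (\<gamma> t) = \<bar>s - t\<bar>" and t: "lo \<le> t" "t \<le> hi"
  shows "curve_length dX \<gamma> lo t = ennreal (t - lo)"
proof (rule antisym)
  show "curve_length dX \<gamma> lo t \<le> ennreal (t - lo)"
  proof (rule curve_length_le)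
    fix ts assume ts: "ts \<in> partitions lo t"
    then have "dX_chain \<gamma> ts = (if ts = [] then 0 else last ts - hd ts)"
      using t by (intro dX_chain_isometric[OF iso]) (auto simp: partitions_def)
    moreover have "last ts \<le> t \<and> lo \<le> hd ts" if "ts \<noteq> []"
      using ts last_in_set[OF that] hd_in_set[OF that] by (auto simp: partitions_def)
    ultimately show "dX_chain \<gamma> ts \<le> t - lo" using t by auto
  qed
  have "dX (\<gamma> lo) (\<gamma> t) = t - lo" using iso t by auto
  then show "ennreal (t - lo) \<le> curve_length dX \<gamma> lo t" using dX_le_curve_length[OF t(1), of \<gamma>] by simp
qed

text \<open>The straight segment in \<open>X\<close>: a geodesic of \<open>Z\<close> and a linear height, both run at the speeds
  making the \<open>max\<close>-distance \<open>dX\<close> parametrize by arc length.\<close>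

lemma dX_linear_segment:
  assumes g: "\<forall>s\<in>{0..D}. \<forall>t\<in>{0..D}. dist (g s) (g t) = \<bar>s - t\<bar>"
    and L: "L = max D \<bar>y1 - y2\<bar>" "L > 0" "D \<ge> 0" and st: "s \<in> {0..L}" "t \<in> {0..L}"
  shows "dX (g (s * D / L), y1 + s * (y2 - y1) / L) (g (t * D / L), y1 + t * (y2 - y1) / L) = \<bar>s - t\<bar>"
proof -
  have scaled: "u * D / L \<in> {0..D}" if "u \<in> {0..L}" for u
    using that L mult_right_mono[of u L D] by (auto simp: divide_le_eq mult.commute)
  define k where "k = \<bar>s - t\<bar> / L"
  have k: "k \<ge> 0" "k * L = \<bar>s - t\<bar>" using L by (auto simp: k_def)
  have "dist (g (s * D / L)) (g (t * D / L)) = k * D"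
    using g scaled[OF st(1)] scaled[OF st(2)] L
    by (simp add: k_def abs_divide diff_divide_distrib[symmetric] left_diff_distrib[symmetric] abs_mult)
  moreover have "(y1 + s * (y2 - y1) / L) - (y1 + t * (y2 - y1) / L) = ((s - t) / L) * (y2 - y1)"
    using L by (simp add: field_simps)
  then have "\<bar>(y1 + s * (y2 - y1) / L) - (y1 + t * (y2 - y1) / L)\<bar> = k * \<bar>y1 - y2\<bar>"
    using L by (simp add: k_def abs_mult abs_minus_commute)
  moreover have "max (k * D) (k * \<bar>y1 - y2\<bar>) = k * L"
    using k(1) L(1) by (simp add: max_mult_distrib_left)
  ultimately show ?thesis using k(2) by (simp add: dX_def)
qed

lemma geodesic_segment_X:
  fixes x1 x2 :: "'a::metric_space" and y1 y2 :: real
  assumes "geodesic_space (UNIV::'a set)"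
  defines "L \<equiv> dX (x1, y1) (x2, y2)"
  obtains \<gamma> where "\<forall>s\<in>{0..L}. \<forall>t\<in>{0..L}. dX (\<gamma> s) (\<gamma> t) = \<bar>s - t\<bar>"
    "\<gamma> 0 = (x1, y1)" "\<gamma> L = (x2, y2)" "\<And>t. t \<in> {0..L} \<Longrightarrow> min y1 y2 \<le> snd (\<gamma> t)"
proof -
  define D where "D = dist x1 x2"
  obtain g where g: "g 0 = x1" "g D = x2" "\<forall>s\<in>{0..D}. \<forall>t\<in>{0..D}. dist (g s) (g t) = \<bar>s - t\<bar>"
    using assms unfolding geodesic_space_def D_def by blast
  have L: "L = max D \<bar>y1 - y2\<bar>" "L \<ge> 0" "D \<ge> 0" by (auto simp: L_def D_def dX_def)
  define \<gamma> where "\<gamma> t = (g (t * D / L), y1 + t * (y2 - y1) / L)" for t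
  have "dX (\<gamma> s) (\<gamma> t) = \<bar>s - t\<bar>" if "s \<in> {0..L}" "t \<in> {0..L}" for s t
    using that dX_linear_segment[OF g(3) L(1) _ L(3) that] L(2)
    by (cases "L = 0") (auto simp: \<gamma>_def)
  moreover have "\<gamma> L = (x2, y2)"
  proof (cases "L = 0")
    case True
    then have "D = 0" "y1 = y2" using L by auto
    then show ?thesis using True g by (simp add: \<gamma>_def D_def)
  qed (simp add: \<gamma>_def g)
  moreover have "min y1 y2 \<le> snd (\<gamma> t)" if t: "t \<in> {0..L}" for t
  proof (cases "L = 0")
    case False
    then have Lp: "L > 0" using L by simp
    show ?thesis
    proof (cases "y1 \<le> y2")
      case False
      have "L * (y2 - y1) \<le> t * (y2 - y1)" using t False by (intro mult_right_mono_neg) auto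
      then have "y2 - y1 \<le> t * (y2 - y1) / L" using Lp by (simp add: le_divide_eq mult.commute)
      then show ?thesis by (simp add: \<gamma>_def)
    qed (use t Lp in \<open>simp add: \<gamma>_def\<close>)
  qed (simp add: \<gamma>_def)
  moreover have "\<gamma> 0 = (x1, y1)" by (simp add: \<gamma>_def g)
  ultimately show ?thesis by (intro that[of \<gamma>]) auto
qed

lemma isometric_rect_curve:
  assumes iso: "\<forall>s\<in>{0..L}. \<forall>t\<in>{0..L}. dX (\<gamma> s) (\<gamma> t) = \<bar>s - t\<bar>" and L: "L \<ge> 0"
    and X: "\<gamma> ` {0..L} \<subseteq> Xset"
  shows "rect_curve dX Xset \<gamma> 0 L"
  unfolding rect_curve_def
proof (intro conjI)
  show "curve_cont dX \<gamma> 0 L"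
    unfolding curve_cont_def using iso by (metis abs_minus_commute)
  show "curve_length dX \<gamma> 0 L < \<infinity>"
    using curve_length_isometric[OF iso L order_refl] by simp
qed (use L X in auto)

lemma line_integral_isometric_le:
  assumes iso: "\<forall>s\<in>{0..L}. \<forall>t\<in>{0..L}. dX (\<gamma> s) (\<gamma> t) = \<bar>s - t\<bar>" and L: "L \<ge> 0"
    and X: "\<gamma> ` {0..L} \<subseteq> Xset" and M: "M \<ge> 0" "\<And>t. t \<in> {0..L} \<Longrightarrow> g (\<gamma> t) \<le> M"
  shows "line_integral dX g \<gamma> 0 L \<le> ennreal (M * L)"
proof -
  let ?F = "arclen_fun dX \<gamma> 0 L"
  have "?F L = L" "?F (-1) = 0"
    using curve_length_isometric[OF iso L order_refl] L by (simp_all add: arclen_fun_def curve_length_point)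
  then have "emeasure (interval_measure ?F) {-1<..L} = ennreal L"
    using emeasure_arclen_Ioc[OF isometric_rect_curve[OF iso L X], of "-1" L] L by simp
  moreover have "line_integral dX g \<gamma> 0 L \<le> (\<integral>\<^sup>+ t. ennreal M * indicator {-1<..L} t \<partial>interval_measure ?F)"
    unfolding line_integral_def
    using M by (intro nn_integral_mono) (auto split: split_indicator intro!: ennreal_leI)
  ultimately show ?thesis using M L by (simp add: nn_integral_cmult_indicator ennreal_mult)
qed

definition d_rho_ennreal :: "real \<Rightarrow> ('a::metric_space \<times> real) \<Rightarrow> ('a \<times> real) \<Rightarrow> ennreal" where
  "d_rho_ennreal \<beta> p q = (INF c \<in> {(\<gamma>, a, b). rect_curve dX Xset \<gamma> a b \<and> \<gamma> a = p \<and> \<gamma> b = q}.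
                 (case c of (\<gamma>, a, b) \<Rightarrow> line_integral dX (rho_w \<beta>) \<gamma> a b))"

lemma d_rho_eq_enn2real: "d_rho \<beta> p q = enn2real (d_rho_ennreal \<beta> p q)"
  by (simp add: d_rho_def d_weighted_def d_rho_ennreal_def)

lemma d_rho_ennreal_le:
  fixes p q :: "'a::metric_space \<times> real"
  assumes geo: "geodesic_space (UNIV::'a set)" and "snd p \<ge> 0" "snd q \<ge> 0" "\<beta> \<ge> 0"
  shows "d_rho_ennreal \<beta> p q \<le> ennreal (max (rho_w \<beta> p) (rho_w \<beta> q) * dX p q)"
proof -
  obtain \<gamma> where iso: "\<forall>s\<in>{0..dX p q}. \<forall>t\<in>{0..dX p q}. dX (\<gamma> s) (\<gamma> t) = \<bar>s - t\<bar>"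
    and ends: "\<gamma> 0 = p" "\<gamma> (dX p q) = q"
    and low: "\<And>t. t \<in> {0..dX p q} \<Longrightarrow> min (snd p) (snd q) \<le> snd (\<gamma> t)"
    using geodesic_segment_X[OF geo, of "fst p" "snd p" "fst q" "snd q"] by auto
  have X: "\<gamma> ` {0..dX p q} \<subseteq> Xset" using low assms by (force simp: Xset_def)
  have "rho_w \<beta> (\<gamma> t) \<le> max (rho_w \<beta> p) (rho_w \<beta> q)" if "t \<in> {0..dX p q}" for t
    using rho_height_antimono[OF assms(4) low[OF that]] rho_height_min[OF assms(4)]
    by (simp add: rho_w_eq_rho_height)
  then have "line_integral dX (rho_w \<beta>) \<gamma> 0 (dX p q) \<le> ennreal (max (rho_w \<beta> p) (rho_w \<beta> q) * dX p q)"
    using rho_height_pos[of \<beta>]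
    by (intro line_integral_isometric_le[OF iso dX_nonneg X]) (auto simp: rho_w_eq_rho_height intro: le_max_iff_disj[THEN iffD2] less_imp_le)
  moreover have "d_rho_ennreal \<beta> p q \<le> line_integral dX (rho_w \<beta>) \<gamma> 0 (dX p q)"
    unfolding d_rho_ennreal_def using isometric_rect_curve[OF iso dX_nonneg X] ends
    by (intro INF_lower2[of "(\<gamma>, 0, dX p q)"]) auto
  ultimately show ?thesis by simp
qed

lemma d_rho_ennreal_finite:
  fixes p q :: "'a::metric_space \<times> real"
  assumes "geodesic_space (UNIV::'a set)" "snd p \<ge> 0" "snd q \<ge> 0" "\<beta> \<ge> 0"
  shows "d_rho_ennreal \<beta> p q < \<infinity>"
  using d_rho_ennreal_le[OF assms] by (simp add: top.not_eq_extremum order_le_less_trans)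

lemma d_rho_le:
  fixes p q :: "'a::metric_space \<times> real"
  assumes "geodesic_space (UNIV::'a set)" "snd p \<ge> 0" "snd q \<ge> 0" "\<beta> \<ge> 0"
  shows "d_rho \<beta> p q \<le> max (rho_w \<beta> p) (rho_w \<beta> q) * dX p q"
proof -
  have "d_rho \<beta> p q \<le> enn2real (ennreal (max (rho_w \<beta> p) (rho_w \<beta> q) * dX p q))"
    unfolding d_rho_eq_enn2real by (intro enn2real_mono d_rho_ennreal_le[OF assms]) auto
  also have "\<dots> = max (rho_w \<beta> p) (rho_w \<beta> q) * dX p q"
    using rho_height_pos[of \<beta>] dX_nonneg[of p q]
    by (intro enn2real_ennreal mult_nonneg_nonneg) (auto simp: rho_w_eq_rho_height le_max_iff_disj less_imp_le)
  finally show ?thesis .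
qed

lemma le_d_rho:
  assumes "d_rho_ennreal \<beta> p q < \<infinity>" and "v \<ge> 0"
    and "\<And>\<gamma> a b. rect_curve dX Xset \<gamma> a b \<Longrightarrow> \<gamma> a = p \<Longrightarrow> \<gamma> b = q \<Longrightarrow>
          ennreal v \<le> line_integral dX (rho_w \<beta>) \<gamma> a b"
  shows "v \<le> d_rho \<beta> p q"
proof -
  have "ennreal v \<le> d_rho_ennreal \<beta> p q"
    unfolding d_rho_ennreal_def by (rule INF_greatest) (auto intro: assms(3))
  then show ?thesis
    using enn2real_mono[of "ennreal v" "d_rho_ennreal \<beta> p q"] assms(1,2) by (simp add: d_rho_eq_enn2real)
qed

lemma d_rho_less_obtains_curve:
  assumes "d_rho_ennreal \<beta> p q < \<infinity>" and "d_rho \<beta> p q < R"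
  obtains \<gamma> a b where "rect_curve dX Xset \<gamma> a b" "\<gamma> a = p" "\<gamma> b = q"
    "line_integral dX (rho_w \<beta>) \<gamma> a b < ennreal R"
proof -
  have "d_rho_ennreal \<beta> p q = ennreal (d_rho \<beta> p q)"
    using assms(1) by (simp add: d_rho_eq_enn2real ennreal_enn2real_if)
  also have "\<dots> < ennreal R"
    using assms(2) enn2real_nonneg[of "d_rho_ennreal \<beta> p q"]
    by (intro ennreal_lessI) (auto simp: d_rho_eq_enn2real simp del: enn2real_nonneg)
  finally show ?thesis using that unfolding d_rho_ennreal_def INF_less_iff by auto
qed

section \<open>Curves of small \<open>\<rho>\<close>-length\<close>

lemma nn_integral_rho_height_tail:
  fixes \<beta> m :: real
  assumes b: "\<beta> > 1" and m: "m \<ge> 1"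
  shows "(\<integral>\<^sup>+ t. ennreal (rho_height \<beta> t) * indicator {m..} t \<partial>lborel) = ennreal (m powr (1-\<beta>) / (\<beta>-1))"
proof -
  have "(\<integral>\<^sup>+ t. ennreal (rho_height \<beta> t) * indicator {m..} t \<partial>lborel)
      = (\<integral>\<^sup>+ t. ennreal (t powr (-\<beta>)) * indicator {m..} t \<partial>lborel)"
  proof (intro nn_integral_cong)
    fix t :: real
    have "rho_height \<beta> t = t powr (-\<beta>)" if "m \<le> t"
      using m that by (cases "t = 1") (auto simp: rho_height_def)
    then show "ennreal (rho_height \<beta> t) * indicator {m..} t = ennreal (t powr (-\<beta>)) * indicator {m..} t"
      by (simp split: split_indicator)
  qed
  also have "\<dots> = ennreal (0 - (- (m powr (1-\<beta>) / (\<beta>-1))))"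
  proof (rule nn_integral_FTC_atLeast)
    fix x :: real assume "m \<le> x"
    then have "((\<lambda>t. - (t powr (1-\<beta>) / (\<beta>-1))) has_real_derivative
        - ((1-\<beta>) * x powr (1-\<beta>-1) / (\<beta>-1))) (at x)"
      using m by (intro DERIV_minus DERIV_cdivide has_real_derivative_powr) auto
    moreover have "- ((1-\<beta>) * x powr (1-\<beta>-1) / (\<beta>-1)) = x powr (-\<beta>)"
      using b by (simp add: field_simps)
    ultimately show "((\<lambda>t. - (t powr (1-\<beta>) / (\<beta>-1))) has_real_derivative x powr (-\<beta>)) (at x)"
      by simp
  next
    have "((\<lambda>t::real. t powr (1-\<beta>)) \<longlongrightarrow> 0) at_top"
      using b by (intro tendsto_neg_powr filterlim_ident) auto
    then show "((\<lambda>t::real. - (t powr (1-\<beta>) / (\<beta>-1))) \<longlongrightarrow> 0) at_top"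
      using tendsto_minus[OF tendsto_divide_zero[of _ _ "\<beta>-1"]] by fastforce
  qed auto
  finally show ?thesis by simp
qed

lemma d_rho_inf_le_primitive_gap:
  fixes \<beta> y0 :: real and x0 :: "'a::metric_space"
  assumes b: "\<beta> > 1"
  shows "d_rho_inf \<beta> (x0, y0) \<le> rho_primitive_lim \<beta> - rho_primitive \<beta> y0"
proof -
  define m where "m = max 1 y0"
  have m: "m \<ge> 1" "y0 \<le> m" by (auto simp: m_def)
  have gap: "(m - y0) + m powr (1-\<beta>) / (\<beta>-1) = rho_primitive_lim \<beta> - rho_primitive \<beta> y0"
    using b by (cases "y0 \<le> 1") (auto simp: m_def rho_primitive_def rho_primitive_lim_def diff_divide_distrib)
  have "(\<integral>\<^sup>+ t \<in> {y0..}. ennreal (rho_w \<beta> (x0, t)) \<partial>lborel)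
      \<le> (\<integral>\<^sup>+ t. ennreal (rho_height \<beta> t) * indicator {y0..m} t
                + ennreal (rho_height \<beta> t) * indicator {m..} t \<partial>lborel)"
    by (intro nn_integral_mono) (auto simp: rho_w_eq_rho_height split: split_indicator)
  also have "\<dots> = (\<integral>\<^sup>+ t. ennreal (rho_height \<beta> t) * indicator {y0..m} t \<partial>lborel)
      + (\<integral>\<^sup>+ t. ennreal (rho_height \<beta> t) * indicator {m..} t \<partial>lborel)"
    using b by (intro nn_integral_add) auto
  also have "(\<integral>\<^sup>+ t. ennreal (rho_height \<beta> t) * indicator {y0..m} t \<partial>lborel)
      \<le> (\<integral>\<^sup>+ t. ennreal 1 * indicator {y0..m} t \<partial>lborel)"
    using rho_height_le_1[of \<beta>] b by (intro nn_integral_mono) (auto split: split_indicator)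
  also have "\<dots> + (\<integral>\<^sup>+ t. ennreal (rho_height \<beta> t) * indicator {m..} t \<partial>lborel)
      = ennreal (rho_primitive_lim \<beta> - rho_primitive \<beta> y0)"
    using m b by (simp add: nn_integral_cmult_indicator nn_integral_rho_height_tail gap[symmetric]
        flip: ennreal_plus)
  finally have "d_rho_inf \<beta> (x0, y0) \<le> enn2real (ennreal (rho_primitive_lim \<beta> - rho_primitive \<beta> y0))"
    unfolding d_rho_inf_def by (intro enn2real_mono) auto
  moreover have "0 \<le> rho_primitive_lim \<beta> - rho_primitive \<beta> y0"
    using gap m b by (metis add_nonneg_nonneg diff_ge_0_iff_ge divide_nonneg_pos powr_ge_zero diff_gt_0_iff_gt)
  ultimately show ?thesis by simp
qed

text \<open>The ratio \<open>K\<close> by which heights can change inside a ball: multiplying a height \<open>\<ge> 1\<close> by \<open>K\<close>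
  divides the tail \<open>\<integral>\<^sub>h\<^sup>\<infinity> \<rho>\<close> by 5.\<close>

definition height_ratio :: "real \<Rightarrow> real" where
  "height_ratio \<beta> = 5 powr (1/(\<beta>-1))"

lemma height_ratio_ge_1: "\<beta> > 1 \<Longrightarrow> height_ratio \<beta> \<ge> 1"
  unfolding height_ratio_def by (intro ge_one_powr_ge_zero) auto

lemma height_ratio_powr: "\<beta> > 1 \<Longrightarrow> height_ratio \<beta> powr (1-\<beta>) = 1/5"
proof -
  assume b: "\<beta> > 1"
  have "height_ratio \<beta> powr (1-\<beta>) = 5 powr (1/(\<beta>-1) * (1-\<beta>))"
    unfolding height_ratio_def by (simp add: powr_powr)
  also have "1/(\<beta>-1) * (1-\<beta>) = -1" using b by (simp add: field_simps)
  finally show ?thesis by (simp add: powr_minus_divide)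
qed

lemma rho_primitive_height_ratio_mult:
  assumes b: "\<beta> > 1" and m: "m \<ge> 1"
  shows "rho_primitive \<beta> (height_ratio \<beta> * m) = rho_primitive_lim \<beta> - m powr (1-\<beta>) / (\<beta>-1) / 5"
proof -
  have K: "height_ratio \<beta> \<ge> 1" using height_ratio_ge_1[OF b] .
  then have "1 \<le> height_ratio \<beta> * m" using m mult_mono[of 1 "height_ratio \<beta>" 1 m] by simp
  then have "rho_primitive \<beta> (height_ratio \<beta> * m)
      = rho_primitive_lim \<beta> - (height_ratio \<beta> * m) powr (1-\<beta>) / (\<beta>-1)"
    by (rule rho_primitive_ge_1[OF b])
  also have "(height_ratio \<beta> * m) powr (1-\<beta>) = m powr (1-\<beta>) / 5"
    using K m by (simp add: powr_mult height_ratio_powr[OF b])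
  finally show ?thesis by simp
qed

lemma rho_primitive_height_ratio_divide:
  assumes b: "\<beta> > 1" and m: "m \<ge> height_ratio \<beta>"
  shows "rho_primitive \<beta> (m / height_ratio \<beta>) = rho_primitive_lim \<beta> - 5 * (m powr (1-\<beta>) / (\<beta>-1))"
proof -
  have K: "height_ratio \<beta> \<ge> 1" using height_ratio_ge_1[OF b] .
  then have "1 \<le> m / height_ratio \<beta>" using m by simp
  then have "rho_primitive \<beta> (m / height_ratio \<beta>)
      = rho_primitive_lim \<beta> - (m / height_ratio \<beta>) powr (1-\<beta>) / (\<beta>-1)"
    by (rule rho_primitive_ge_1[OF b])
  also have "(m / height_ratio \<beta>) powr (1-\<beta>) = 5 * m powr (1-\<beta>)"
    using K m by (simp add: powr_divide height_ratio_powr[OF b])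
  finally show ?thesis by simp
qed

lemma exists_powr_eq_two_thirds:
  assumes "\<beta> > 1"
  obtains q :: real where "q > 1" "q powr (-\<beta>) = 2/3"
proof
  show "(3/2) powr (1/\<beta>) > (1::real)" using assms by (intro gr_one_powr) auto
  have "((3/2::real) powr (1/\<beta>)) powr (-\<beta>) = (3/2) powr (1/\<beta> * (-\<beta>))" by (simp add: powr_powr)
  also have "1/\<beta> * (-\<beta>) = -1" using assms by simp
  finally show "((3/2::real) powr (1/\<beta>)) powr (-\<beta>) = 2/3" by (simp add: powr_minus_divide)
qed

context X_curve
begin

lemma line_integral_ge_of_height_le:
  assumes "\<And>v. v \<in> {a..b} \<Longrightarrow> height v \<le> H"
  shows "ennreal (rho_height \<beta> H * dX (\<gamma> a) (\<gamma> b)) \<le> line_integral dX (rho_w \<beta>) \<gamma> a b"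
proof -
  have "ennreal (rho_height \<beta> H * dX (\<gamma> a) (\<gamma> b)) \<le> rho_cost a b"
    using le_endpoints assms rho_height_pos[of \<beta> H] beta
    by (intro rho_cost_ge_layer) (auto simp: less_imp_le rho_w_eq_rho_height rho_height_antimono)
  then show ?thesis using rho_cost_le_line_integral by (rule order_trans)
qed

lemma rho_cost_ascent_from_start:
  assumes q: "q > 1" "q powr (-\<beta>) = 2/3" and "0 \<le> A" "A \<le> B" "height a \<le> A"
    and v: "v \<in> {a..b}" "B \<le> height v"
  shows "ennreal (2/3 * (rho_primitive \<beta> B - rho_primitive \<beta> A)) \<le> line_integral dX (rho_w \<beta>) \<gamma> a b"
proof -
  have "ennreal (2/3 * (rho_primitive \<beta> B - rho_primitive \<beta> A)) \<le> rho_cost a v"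
    using rho_cost_ge_ascent[of q A B a v] assms by auto
  also have "\<dots> \<le> rho_cost a b" using v by (intro rho_cost_mono) auto
  finally show ?thesis using rho_cost_le_line_integral by (rule order_trans)
qed

lemma rho_cost_descent_from_start:
  assumes q: "q > 1" "q powr (-\<beta>) = 2/3" and "0 \<le> A" "A \<le> B" "B \<le> height a"
    and v: "v \<in> {a..b}" "height v \<le> A"
  shows "ennreal (2/3 * (rho_primitive \<beta> B - rho_primitive \<beta> A)) \<le> line_integral dX (rho_w \<beta>) \<gamma> a b"
proof -
  have "ennreal (2/3 * (rho_primitive \<beta> B - rho_primitive \<beta> A)) \<le> rho_cost a v"
    using rho_cost_ge_descent[of q A B a v] assms by auto
  also have "\<dots> \<le> rho_cost a b" using v by (intro rho_cost_mono) auto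
  finally show ?thesis using rho_cost_le_line_integral by (rule order_trans)
qed

lemma height_le_near_start:
  assumes start: "height a = y0" "y0 \<ge> 0"
    and short: "line_integral dX (rho_w \<beta>) \<gamma> a b < ennreal R"
    and far: "2 * R \<le> rho_primitive_lim \<beta> - rho_primitive \<beta> y0" and v: "v \<in> {a..b}"
  shows "height v \<le> height_ratio \<beta> * max 1 y0"
proof (rule ccontr)
  define K where "K = height_ratio \<beta>"
  define m0 where "m0 = max 1 y0"
  assume "\<not> height v \<le> height_ratio \<beta> * max 1 y0"
  then have high: "K * m0 \<le> height v" by (simp add: K_def m0_def)
  have K: "K \<ge> 1" using height_ratio_ge_1[OF beta] by (simp add: K_def)
  have m0: "m0 \<ge> 1" "y0 \<le> K * m0" using K start(2) mult_mono[of 1 K y0 m0] by (auto simp: m0_def)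
  obtain q where q: "q > 1" "q powr (-\<beta>) = 2/3" using exists_powr_eq_two_thirds[OF beta] .
  have climb: "ennreal (2/3 * (rho_primitive \<beta> (K * m0) - rho_primitive \<beta> y0))
      \<le> line_integral dX (rho_w \<beta>) \<gamma> a b"
    using rho_cost_ascent_from_start[OF q start(2) m0(2) _ v high] start by simp
  define P where "P = m0 powr (1-\<beta>) / (\<beta>-1)"
  have "rho_primitive \<beta> (K * m0) = rho_primitive_lim \<beta> - P / 5"
    using rho_primitive_height_ratio_mult[OF beta m0(1)] by (simp add: K_def P_def)
  moreover have "P \<le> rho_primitive_lim \<beta> - rho_primitive \<beta> y0"
    using rho_primitive_lim_minus_ge[OF beta, of y0] by (simp add: m0_def P_def)
  moreover have "0 < P" using beta m0 by (simp add: P_def)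
  ultimately have "R \<le> 2/3 * (rho_primitive \<beta> (K * m0) - rho_primitive \<beta> y0)" using far unfolding right_diff_distrib by linarith
  then show False using ennreal_leI climb short by (meson leD order_trans)
qed

lemma height_ge_near_start:
  assumes start: "height a = y0" "y0 \<ge> 0"
    and short: "line_integral dX (rho_w \<beta>) \<gamma> a b < ennreal R"
    and far: "2 * R \<le> rho_primitive_lim \<beta> - rho_primitive \<beta> y0" and v: "v \<in> {a..b}"
  shows "max 1 y0 / height_ratio \<beta> \<le> max 1 (height v)"
proof (rule ccontr)
  define K where "K = height_ratio \<beta>"
  assume "\<not> max 1 y0 / height_ratio \<beta> \<le> max 1 (height v)"
  then have low: "max 1 (height v) < max 1 y0 / K" unfolding K_def by (rule not_le_imp_less)
  have K: "K \<ge> 1" using height_ratio_ge_1[OF beta] by (simp add: K_def)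
  have "1 < max 1 y0 / K" using low max.cobounded1[of 1 "height v"] by (meson le_less_trans)
  then have y0: "K \<le> y0" "max 1 y0 = y0" using K by (auto simp: less_divide_eq max_def split: if_splits)
  have A: "y0 / K \<le> y0" "0 \<le> y0 / K" using K start(2) by (simp_all add: divide_le_eq mult_le_cancel_left1)
  have "height v \<le> y0 / K" using low y0 by simp
  obtain q where q: "q > 1" "q powr (-\<beta>) = 2/3" using exists_powr_eq_two_thirds[OF beta] .
  have climb: "ennreal (2/3 * (rho_primitive \<beta> y0 - rho_primitive \<beta> (y0 / K)))
      \<le> line_integral dX (rho_w \<beta>) \<gamma> a b"
    using rho_cost_descent_from_start[OF q A(2,1) _ v \<open>height v \<le> y0 / K\<close>] start by simp
  define P where "P = y0 powr (1-\<beta>) / (\<beta>-1)"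
  have "rho_primitive \<beta> (y0 / K) = rho_primitive_lim \<beta> - 5 * P"
    using rho_primitive_height_ratio_divide[OF beta] y0 by (simp add: K_def P_def)
  moreover have "rho_primitive \<beta> y0 = rho_primitive_lim \<beta> - P"
    using rho_primitive_ge_1[OF beta] y0 K by (simp add: P_def)
  moreover have "0 < P" using beta y0 K by (simp add: P_def)
  ultimately have "R \<le> 2/3 * (rho_primitive \<beta> y0 - rho_primitive \<beta> (y0 / K))" using far unfolding right_diff_distrib by linarith
  then show False using ennreal_leI climb short by (meson leD order_trans)
qed

end

lemma rho_height_height_ratio_sq:
  assumes b: "\<beta> > 1" and m: "m \<ge> 1"
  shows "rho_height \<beta> (height_ratio \<beta> * (height_ratio \<beta> * m)) = rho_height \<beta> m / (height_ratio \<beta> powr \<beta>)\<^sup>2"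
proof -
  have K: "height_ratio \<beta> \<ge> 1" using height_ratio_ge_1[OF b] .
  then have "1 \<le> height_ratio \<beta> * (height_ratio \<beta> * m)"
    using m mult_mono[of 1 "height_ratio \<beta>" 1 m] mult_mono[of 1 "height_ratio \<beta>" 1 "height_ratio \<beta> * m"]
    by simp
  then show ?thesis
    using b K m by (simp add: rho_height_eq_powr max_absorb2 powr_mult power2_eq_square powr_minus_divide)
qed

definition d_rho_lower_const :: "real \<Rightarrow> real \<Rightarrow> real" where
  "d_rho_lower_const \<beta> D =
     min (1 / (height_ratio \<beta> powr \<beta>)\<^sup>2) (8 / (75 * (\<beta>-1) * (D + height_ratio \<beta>)))"

lemma d_rho_lower_const_pos: "\<beta> > 1 \<Longrightarrow> D \<ge> 0 \<Longrightarrow> d_rho_lower_const \<beta> D > 0"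
  using height_ratio_ge_1[of \<beta>] by (simp add: d_rho_lower_const_def)

lemma d_rho_lower_const_mult_le:
  assumes b: "\<beta> > 1" and D: "D \<ge> 0" and d: "0 \<le> d" "d \<le> D + height_ratio \<beta> * max 1 y0"
  shows "d_rho_lower_const \<beta> D * rho_height \<beta> y0 * d \<le> 8/75 * (max 1 y0 powr (1-\<beta>) / (\<beta>-1))"
proof -
  define K where "K = height_ratio \<beta>"
  define m0 where "m0 = max 1 y0"
  define r0 where "r0 = rho_height \<beta> y0"
  have K: "K \<ge> 1" using height_ratio_ge_1[OF b] by (simp add: K_def)
  have m0: "m0 \<ge> 1" by (simp add: m0_def)
  have r0: "r0 > 0" "m0 powr (1-\<beta>) = m0 * r0"
    using b m0 powr_add[of m0 1 "-\<beta>"] by (auto simp: r0_def m0_def rho_height_pos rho_height_eq_powr)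
  have "r0 * d \<le> r0 * (D + K * m0)" using r0(1) d by (intro mult_left_mono) (auto simp: K_def m0_def)
  also have "\<dots> = r0 * D + K * (m0 * r0)" by (simp add: algebra_simps)
  also have "r0 * D \<le> (m0 * r0) * D" using r0 m0 D by (intro mult_right_mono) auto
  finally have rd: "r0 * d \<le> (D + K) * m0 powr (1-\<beta>)" by (simp add: r0(2) algebra_simps)
  have "d_rho_lower_const \<beta> D \<le> 8 / (75 * (\<beta>-1) * (D + K))" by (simp add: d_rho_lower_const_def K_def)
  then have "d_rho_lower_const \<beta> D * (r0 * d) \<le> 8 / (75 * (\<beta>-1) * (D + K)) * ((D + K) * m0 powr (1-\<beta>))"
    by (rule mult_mono[OF _ rd]) (use b D K r0 d in auto)
  also have "\<dots> = 8/75 * (m0 powr (1-\<beta>) / (\<beta>-1))"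
  proof -
    have "c / (A * B) * (B * N) = c * N / A" if "B \<noteq> 0" for c A B N :: real
      using that by (cases "A = 0") (simp_all add: field_simps)
    then show ?thesis using D K by simp
  qed
  finally show ?thesis by (simp add: mult.assoc r0_def m0_def)
qed

context X_curve
begin

lemma line_integral_ge_climb:
  defines "K \<equiv> height_ratio \<beta>"
  assumes m: "m \<ge> 1" and start: "0 \<le> height a" "height a \<le> K * m"
    and v: "v \<in> {a..b}" "K * (K * m) \<le> height v"
  shows "ennreal (8/75 * (m powr (1-\<beta>) / (\<beta>-1))) \<le> line_integral dX (rho_w \<beta>) \<gamma> a b"
proof -
  have K: "K \<ge> 1" using height_ratio_ge_1[OF beta] by (simp add: K_def)
  have Km: "1 \<le> K * m" using K m mult_mono[of 1 K 1 m] by simp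
  obtain q where q: "q > 1" "q powr (-\<beta>) = 2/3" using exists_powr_eq_two_thirds[OF beta] .
  have "K * m \<le> K * (K * m)" using K Km mult_right_mono[of 1 K "K * m"] by simp
  then have climb: "ennreal (2/3 * (rho_primitive \<beta> (K * (K * m)) - rho_primitive \<beta> (K * m)))
      \<le> line_integral dX (rho_w \<beta>) \<gamma> a b"
    using start v Km by (intro rho_cost_ascent_from_start[OF q]) auto
  define P where "P = m powr (1-\<beta>) / (\<beta>-1)"
  have "rho_primitive \<beta> (K * (K * m)) = rho_primitive_lim \<beta> - (K * m) powr (1-\<beta>) / (\<beta>-1) / 5"
    using rho_primitive_height_ratio_mult[OF beta Km] by (simp only: K_def)
  also have "(K * m) powr (1-\<beta>) = m powr (1-\<beta>) / 5"
    using K m height_ratio_powr[OF beta] by (simp add: powr_mult K_def)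
  finally have "rho_primitive \<beta> (K * (K * m)) = rho_primitive_lim \<beta> - P / 5 / 5"
    using beta by (simp add: P_def field_simps)
  moreover have "rho_primitive \<beta> (K * m) = rho_primitive_lim \<beta> - P / 5"
    using rho_primitive_height_ratio_mult[OF beta m] by (simp add: K_def P_def)
  ultimately have "2/3 * (rho_primitive \<beta> (K * (K * m)) - rho_primitive \<beta> (K * m)) = 8/75 * P"
    by simp
  with climb show ?thesis by (simp only: P_def)
qed

text \<open>Either the curve stays below height \<open>K\<^sup>2 max 1 y0\<close>, where \<open>\<rho>\<close> is comparable to \<open>\<rho>(y0)\<close>, or it
  climbs there from height \<open>K max 1 y0\<close>, which costs a fixed multiple of \<open>max 1 y0\<^bsup>1-\<beta>\<^esup>\<close>; this
  dominates \<open>\<rho>(y0) dX\<close> because \<open>Z\<close> is bounded.\<close>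

lemma line_integral_ge_dX_endpoints:
  assumes diam: "\<And>u v::'a. dist u v \<le> D"
    and ends: "0 \<le> height a" "height a \<le> height_ratio \<beta> * max 1 y0"
      "0 \<le> height b" "height b \<le> height_ratio \<beta> * max 1 y0"
  shows "ennreal (d_rho_lower_const \<beta> D * rho_height \<beta> y0 * dX (\<gamma> a) (\<gamma> b))
    \<le> line_integral dX (rho_w \<beta>) \<gamma> a b"
proof -
  define K where "K = height_ratio \<beta>"
  define m0 where "m0 = max 1 y0"
  define r0 where "r0 = rho_height \<beta> y0"
  define d where "d = dX (\<gamma> a) (\<gamma> b)"
  define \<kappa> where "\<kappa> = d_rho_lower_const \<beta> D"
  have m0: "m0 \<ge> 1" "rho_height \<beta> m0 = r0" using beta by (auto simp: m0_def r0_def rho_height_eq_powr)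
  have D: "D \<ge> 0" using diam[of undefined undefined] by simp
  have r0d: "0 \<le> r0 * d"
    using rho_height_pos[of \<beta> y0] dX_nonneg[of "\<gamma> a" "\<gamma> b"] by (simp add: r0_def d_def)
  have "ennreal (\<kappa> * r0 * d) \<le> line_integral dX (rho_w \<beta>) \<gamma> a b"
  proof (cases "\<forall>v\<in>{a..b}. height v \<le> K * (K * m0)")
    case True
    have "\<kappa> \<le> 1 / (K powr \<beta>)\<^sup>2" by (simp add: \<kappa>_def d_rho_lower_const_def K_def)
    then have "\<kappa> * (r0 * d) \<le> 1 / (K powr \<beta>)\<^sup>2 * (r0 * d)" using r0d by (rule mult_right_mono)
    then have "\<kappa> * r0 * d \<le> rho_height \<beta> (K * (K * m0)) * d"
      using rho_height_height_ratio_sq[OF beta m0(1)] m0(2) by (simp add: K_def mult.assoc)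
    then show ?thesis
      using line_integral_ge_of_height_le[of "K * (K * m0)"] True unfolding d_def
      by (meson ennreal_leI order_trans)
  next
    case False
    then obtain v where "v \<in> {a..b}" "K * (K * m0) \<le> height v" by auto
    then have "ennreal (8/75 * (m0 powr (1-\<beta>) / (\<beta>-1))) \<le> line_integral dX (rho_w \<beta>) \<gamma> a b"
      using ends m0 by (intro line_integral_ge_climb) (auto simp: K_def m0_def)
    moreover have "d \<le> D + K * m0"
      using diam[of "fst (\<gamma> a)" "fst (\<gamma> b)"] ends D by (auto simp: d_def dX_def K_def m0_def)
    then have "\<kappa> * r0 * d \<le> 8/75 * (m0 powr (1-\<beta>) / (\<beta>-1))"
      unfolding \<kappa>_def r0_def m0_def K_def
      by (intro d_rho_lower_const_mult_le[OF beta D]) (simp_all add: d_def dX_nonneg)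
    ultimately show ?thesis by (metis ennreal_leI order_trans)
  qed
  then show ?thesis by (simp add: \<kappa>_def r0_def d_def)
qed

end

section \<open>Comparability inside a ball\<close>

locale rho_ball =
  fixes \<beta> D :: real and x0 x :: "'a::metric_space" and y0 y R :: real
  assumes geodesic: "geodesic_space (UNIV :: 'a set)"
    and diam: "\<And>u v :: 'a. dist u v \<le> D"
    and beta: "\<beta> > 1" and y0: "y0 \<ge> 0" and y: "y \<ge> 0"
    and far: "\<not> d_rho_inf \<beta> (x0, y0) < 2 * R"
    and near: "d_rho \<beta> (x0, y0) (x, y) < R"
begin

abbreviation K :: real where "K \<equiv> height_ratio \<beta>"
abbreviation Kb :: real where "Kb \<equiv> height_ratio \<beta> powr \<beta>"
abbreviation r0 :: real where "r0 \<equiv> rho_w \<beta> (x0, y0)"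
abbreviation r :: real where "r \<equiv> rho_w \<beta> (x, y)"

lemma K_ge_1: "K \<ge> 1" and Kb_ge_1: "Kb \<ge> 1"
  using height_ratio_ge_1[OF beta] beta by (auto intro: ge_one_powr_ge_zero)

lemma r0_pos: "r0 > 0" and r_pos: "r > 0"
  by (simp_all add: rho_w_eq_rho_height rho_height_pos)

lemma d_rho_ennreal_finite_ball:
  "d_rho_ennreal \<beta> (x0, y0) (x, y) < \<infinity>" "d_rho_ennreal \<beta> (x, y) (x0, y0) < \<infinity>"
  using d_rho_ennreal_finite[OF geodesic] y0 y beta by auto

lemma heights_comparable: "y \<le> K * max 1 y0" "max 1 y0 / K \<le> max 1 y"
proof -
  obtain \<gamma> a b where \<gamma>: "rect_curve dX Xset \<gamma> a b" "\<gamma> a = (x0, y0)" "\<gamma> b = (x, y)"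
    "line_integral dX (rho_w \<beta>) \<gamma> a b < ennreal R"
    using d_rho_less_obtains_curve[OF d_rho_ennreal_finite_ball(1) near] by blast
  interpret X_curve \<gamma> a b \<beta> using \<gamma>(1) beta by unfold_locales
  have "2 * R \<le> rho_primitive_lim \<beta> - rho_primitive \<beta> y0"
    using far d_rho_inf_le_primitive_gap[OF beta, of x0 y0] by simp
  then show "y \<le> K * max 1 y0" "max 1 y0 / K \<le> max 1 y"
    using height_le_near_start[OF _ y0 \<gamma>(4), of b] height_ge_near_start[OF _ y0 \<gamma>(4), of b]
      \<gamma>(2,3) le_endpoints by auto
qed

lemma rho_comparable: "r \<le> Kb * r0" "r0 \<le> Kb * r"
proof -
  have "0 < max 1 y0 / K" using K_ge_1 by simp
  then have "r \<le> (max 1 y0 / K) powr (-\<beta>)"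
    using heights_comparable(2) beta by (simp add: rho_w_eq_rho_height rho_height_eq_powr powr_mono2')
  also have "\<dots> = Kb * r0"
    using K_ge_1 beta by (simp add: rho_w_eq_rho_height rho_height_eq_powr powr_divide powr_minus_divide)
  finally show "r \<le> Kb * r0" .
  have "max 1 y \<le> K * max 1 y0"
    using heights_comparable(1) K_ge_1 mult_mono[of 1 K 1 "max 1 y0"] by simp
  then have "(K * max 1 y0) powr (-\<beta>) \<le> r"
    using beta by (simp add: rho_w_eq_rho_height rho_height_eq_powr powr_mono2')
  moreover have "(K * max 1 y0) powr (-\<beta>) = r0 / Kb"
    using K_ge_1 beta by (simp add: rho_w_eq_rho_height rho_height_eq_powr powr_mult powr_minus_divide)
  ultimately have "r0 / Kb \<le> r" by simp
  then show "r0 \<le> Kb * r" using K_ge_1 by (simp add: divide_le_eq mult.commute)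
qed

lemma d_rho_ge_ball:
  assumes "(p, q) = ((x0, y0), (x, y)) \<or> (p, q) = ((x, y), (x0, y0))"
  shows "d_rho_lower_const \<beta> D * r0 * dX p q \<le> d_rho \<beta> p q"
proof (rule le_d_rho)
  show "d_rho_ennreal \<beta> p q < \<infinity>" using assms d_rho_ennreal_finite_ball by auto
  have "D \<ge> 0" using diam[of x x] by simp
  then have "d_rho_lower_const \<beta> D > 0" by (rule d_rho_lower_const_pos[OF beta])
  then show "0 \<le> d_rho_lower_const \<beta> D * r0 * dX p q"
    using r0_pos dX_nonneg[of p q] by simp
  fix \<gamma> a b assume \<gamma>: "rect_curve dX Xset \<gamma> a b" "\<gamma> a = p" "\<gamma> b = q"
  interpret X_curve \<gamma> a b \<beta> using \<gamma>(1) beta by unfold_locales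
  have "y0 \<le> K * max 1 y0" using K_ge_1 y0 mult_mono[of 1 K y0 "max 1 y0"] by simp
  then have "ennreal (d_rho_lower_const \<beta> D * rho_height \<beta> y0 * dX (\<gamma> a) (\<gamma> b))
      \<le> line_integral dX (rho_w \<beta>) \<gamma> a b"
    using assms \<gamma>(2,3) heights_comparable(1) y0 y
    by (intro line_integral_ge_dX_endpoints[OF diam]) auto
  then show "ennreal (d_rho_lower_const \<beta> D * r0 * dX p q) \<le> line_integral dX (rho_w \<beta>) \<gamma> a b"
    using \<gamma>(2,3) by (simp add: rho_w_eq_rho_height)
qed

lemma d_rho_le_ball:
  assumes "(p, q) = ((x0, y0), (x, y)) \<or> (p, q) = ((x, y), (x0, y0))"
  shows "d_rho \<beta> p q \<le> Kb * r0 * dX p q"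
proof -
  have "d_rho \<beta> p q \<le> max r0 r * dX p q"
    using assms d_rho_le[OF geodesic, of p q \<beta>] y0 y beta by (auto simp: max.commute)
  also have "\<dots> \<le> Kb * r0 * dX p q"
    using rho_comparable(1) Kb_ge_1 r0_pos dX_nonneg[of p q]
    by (intro mult_right_mono) (auto simp: mult_le_cancel_right1)
  finally show ?thesis .
qed

lemma vertical_comparable:
  assumes "y0 \<ge> 1" "y > 1"
  shows "\<bar>y0 powr (1-\<beta>) - y powr (1-\<beta>)\<bar> / (\<beta>-1) \<le> Kb * r0 * \<bar>y - y0\<bar>"
    and "r0 * \<bar>y - y0\<bar> / Kb \<le> \<bar>y0 powr (1-\<beta>) - y powr (1-\<beta>)\<bar> / (\<beta>-1)"
proof -
  have "r0 = y0 powr (-\<beta>)"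
    using assms beta by (simp add: rho_w_eq_rho_height rho_height_eq_powr max_absorb2)
  then show "\<bar>y0 powr (1-\<beta>) - y powr (1-\<beta>)\<bar> / (\<beta>-1) \<le> Kb * r0 * \<bar>y - y0\<bar>"
    and "r0 * \<bar>y - y0\<bar> / Kb \<le> \<bar>y0 powr (1-\<beta>) - y powr (1-\<beta>)\<bar> / (\<beta>-1)"
    using abs_powr_one_minus_diff_bounds[OF beta K_ge_1 assms] heights_comparable assms
    by (simp_all add: max_absorb2)
qed

end

definition ball_constant :: "real \<Rightarrow> real \<Rightarrow> real" where
  "ball_constant \<beta> D = (height_ratio \<beta> powr \<beta>)\<^sup>2 + (height_ratio \<beta> powr \<beta> + 1) / d_rho_lower_const \<beta> D"

lemma ball_constant_pos: "\<beta> > 1 \<Longrightarrow> D \<ge> 0 \<Longrightarrow> ball_constant \<beta> D > 0"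
  using d_rho_lower_const_pos[of \<beta> D] height_ratio_ge_1[of \<beta>] ge_one_powr_ge_zero[of "height_ratio \<beta>" \<beta>]
  by (simp add: ball_constant_def add_pos_nonneg)

context rho_ball
begin

abbreviation C :: real where "C \<equiv> ball_constant \<beta> D"
abbreviation \<kappa> :: real where "\<kappa> \<equiv> d_rho_lower_const \<beta> D"

lemma kappa_pos: "\<kappa> > 0"
  using d_rho_lower_const_pos[OF beta] diam[of x x] by simp

lemma ball_constant_ge: "Kb\<^sup>2 \<le> C" "Kb \<le> C" "Kb + 1 \<le> C * \<kappa>" "1 \<le> C * \<kappa>" "C > 0"
proof -
  show C1: "Kb\<^sup>2 \<le> C" using kappa_pos Kb_ge_1 by (simp add: ball_constant_def)
  show "Kb \<le> C" using C1 Kb_ge_1 power2_eq_square[of Kb] mult_le_cancel_left1[of Kb Kb] by simp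
  have "(Kb + 1) / \<kappa> \<le> C" using Kb_ge_1 by (simp add: ball_constant_def)
  then show C2: "Kb + 1 \<le> C * \<kappa>" using kappa_pos by (simp add: divide_le_eq)
  then show "1 \<le> C * \<kappa>" using Kb_ge_1 by simp
  show "C > 0" using C1 Kb_ge_1 by (smt (verit) one_le_power)
qed

lemma weights_comparable:
  "omega_w \<beta> (x0, y0) / C \<le> omega_w \<beta> (x, y)" "omega_w \<beta> (x, y) \<le> C * omega_w \<beta> (x0, y0)"
  "r0 / C \<le> r" "r \<le> C * r0"
proof -
  have sq: "r0\<^sup>2 \<le> Kb\<^sup>2 * r\<^sup>2" "r\<^sup>2 \<le> Kb\<^sup>2 * r0\<^sup>2"
    using power_mono[OF rho_comparable(2)] power_mono[OF rho_comparable(1)] r0_pos r_pos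
    by (simp_all add: power_mult_distrib)
  have "r0\<^sup>2 \<le> C * r\<^sup>2" using sq(1) ball_constant_ge(1) by (smt (verit) mult_right_mono zero_le_power2)
  then show "omega_w \<beta> (x0, y0) / C \<le> omega_w \<beta> (x, y)"
    using ball_constant_ge(5) by (simp add: omega_w_eq_rho_height rho_w_eq_rho_height divide_le_eq mult.commute)
  show "omega_w \<beta> (x, y) \<le> C * omega_w \<beta> (x0, y0)"
    using sq(2) ball_constant_ge(1)
    by (simp add: omega_w_eq_rho_height rho_w_eq_rho_height) (smt (verit) mult_right_mono zero_le_power2)
  have "r0 \<le> C * r" using rho_comparable(2) ball_constant_ge(2) r_pos by (smt (verit) mult_right_mono)
  then show "r0 / C \<le> r" using ball_constant_ge(5) by (simp add: divide_le_eq mult.commute)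
  show "r \<le> C * r0" using rho_comparable(1) ball_constant_ge(2) r0_pos by (smt (verit) mult_right_mono)
qed

lemma d_rho_comparable:
  "r0 / C * dX (x0, y0) (x, y) \<le> d_rho \<beta> (x0, y0) (x, y)"
  "d_rho \<beta> (x0, y0) (x, y) \<le> C * r0 * dX (x0, y0) (x, y)"
proof -
  have "r0 / C * dX (x0, y0) (x, y) \<le> \<kappa> * r0 * dX (x0, y0) (x, y)"
    using ball_constant_ge(4,5) r0_pos dX_nonneg
    by (intro mult_right_mono) (auto simp: divide_le_eq mult.commute)
  then show "r0 / C * dX (x0, y0) (x, y) \<le> d_rho \<beta> (x0, y0) (x, y)"
    using d_rho_ge_ball[of "(x0, y0)" "(x, y)"] by simp
  have "Kb * r0 * dX (x0, y0) (x, y) \<le> C * r0 * dX (x0, y0) (x, y)"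
    using ball_constant_ge(2) r0_pos dX_nonneg by (intro mult_right_mono) auto
  then show "d_rho \<beta> (x0, y0) (x, y) \<le> C * r0 * dX (x0, y0) (x, y)"
    using d_rho_le_ball[of "(x0, y0)" "(x, y)"] by simp
qed

lemma d_rho_vertical_lower:
  assumes "y0 \<ge> 1" "y > 1"
  shows "1 / (C * (\<beta> - 1)) * \<bar>y0 powr (1 - \<beta>) - y powr (1 - \<beta>)\<bar> + dist x x0 / (C * y0 powr \<beta>)
    \<le> d_rho \<beta> (x, y) (x0, y0)"
proof -
  define d where "d = dX (x, y) (x0, y0)"
  define \<Delta> where "\<Delta> = \<bar>y0 powr (1 - \<beta>) - y powr (1 - \<beta>)\<bar>"
  have r0: "1 / y0 powr \<beta> = r0"
    using assms beta by (simp add: rho_w_eq_rho_height rho_height_eq_powr max_absorb2 powr_minus_divide)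
  have d: "\<bar>y - y0\<bar> \<le> d" "dist x x0 \<le> d" "0 \<le> d"
    using abs_snd_le_dX dist_fst_le_dX dX_nonneg by (auto simp: d_def)
  have "Kb * r0 * \<bar>y - y0\<bar> \<le> Kb * r0 * d" using d r0_pos Kb_ge_1 by (intro mult_left_mono) auto
  then have "\<Delta> / (\<beta> - 1) \<le> Kb * r0 * d"
    using vertical_comparable(1)[OF assms] by (simp add: \<Delta>_def)
  have "1 / (C * (\<beta> - 1)) * \<Delta> + dist x x0 / (C * y0 powr \<beta>) = (\<Delta> / (\<beta> - 1) + r0 * dist x x0) / C"
    unfolding r0[symmetric] using ball_constant_ge(5) beta assms(1) by (simp add: field_simps)
  also have "\<dots> \<le> (Kb * r0 * d + r0 * d) / C"
    using \<open>\<Delta> / (\<beta> - 1) \<le> Kb * r0 * d\<close> d r0_pos ball_constant_ge(5)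
    by (intro divide_right_mono add_mono mult_left_mono) auto
  also have "\<dots> = (Kb + 1) / C * (r0 * d)" by (simp add: algebra_simps add_divide_distrib)
  also have "\<dots> \<le> \<kappa> * (r0 * d)"
    using ball_constant_ge(3,5) r0_pos d(3) by (intro mult_right_mono) (auto simp: divide_le_eq mult.commute)
  also have "\<dots> \<le> d_rho \<beta> (x, y) (x0, y0)"
    using d_rho_ge_ball[of "(x, y)" "(x0, y0)"] by (simp add: d_def mult.assoc)
  finally show ?thesis by (simp add: \<Delta>_def)
qed

lemma d_rho_vertical_upper:
  assumes "y0 \<ge> 1" "y > 1"
  shows "d_rho \<beta> (x, y) (x0, y0)
    \<le> C / (\<beta> - 1) * \<bar>y0 powr (1 - \<beta>) - y powr (1 - \<beta>)\<bar> + C / y0 powr \<beta> * dist x x0"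
proof -
  define \<Delta> where "\<Delta> = \<bar>y0 powr (1 - \<beta>) - y powr (1 - \<beta>)\<bar>"
  have r0: "1 / y0 powr \<beta> = r0"
    using assms beta by (simp add: rho_w_eq_rho_height rho_height_eq_powr max_absorb2 powr_minus_divide)
  have "d_rho \<beta> (x, y) (x0, y0) \<le> Kb * r0 * dX (x, y) (x0, y0)"
    using d_rho_le_ball[of "(x, y)" "(x0, y0)"] by simp
  also have "\<dots> \<le> Kb * r0 * (\<bar>y - y0\<bar> + dist x x0)"
    using dX_le_abs_snd_plus_dist[of "(x, y)" "(x0, y0)"] Kb_ge_1 r0_pos by (intro mult_left_mono) auto
  also have "\<dots> = Kb\<^sup>2 * (r0 * \<bar>y - y0\<bar> / Kb) + Kb * (r0 * dist x x0)"
    using Kb_ge_1 by (simp add: field_simps power2_eq_square)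
  also have "\<dots> \<le> C * (\<Delta> / (\<beta> - 1)) + C * (r0 * dist x x0)"
    using vertical_comparable(2)[OF assms] ball_constant_ge(1,2,5) beta r0_pos
    by (intro add_mono mult_mono mult_right_mono) (auto simp: \<Delta>_def)
  also have "\<dots> = C / (\<beta> - 1) * \<Delta> + C / y0 powr \<beta> * dist x x0"
    unfolding r0[symmetric] by simp
  finally show ?thesis by (simp add: \<Delta>_def)
qed

end

theorem lemma7p2:
  fixes \<mu> :: "'a::metric_space measure" and a \<beta> :: real
  assumes "compact (UNIV :: 'a set)"
    and "geodesic_space (UNIV :: 'a set)"
    and "doubling_measure \<mu>"
    and "supports_2_poincare \<mu>"
    and "-1 < a" and "a < 1"
    and "\<beta> > 1"
  shows "\<exists>C>0. \<forall>(x0::'a) y0 R. y0 \<ge> 0 \<and> R > 0 \<and> \<not> (d_rho_inf \<beta> (x0, y0) < 2 * R) \<longrightarrow>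
     (\<forall>x y. y \<ge> 0 \<and> d_rho \<beta> (x0, y0) (x, y) < R \<longrightarrow>
        omega_w \<beta> (x0, y0) / C \<le> omega_w \<beta> (x, y) \<and> omega_w \<beta> (x, y) \<le> C * omega_w \<beta> (x0, y0) \<and>
        rho_w \<beta> (x0, y0) / C \<le> rho_w \<beta> (x, y) \<and> rho_w \<beta> (x, y) \<le> C * rho_w \<beta> (x0, y0) \<and>
        rho_w \<beta> (x0, y0) / C * dX (x0, y0) (x, y) \<le> d_rho \<beta> (x0, y0) (x, y) \<and>
        d_rho \<beta> (x0, y0) (x, y) \<le> C * rho_w \<beta> (x0, y0) * dX (x0, y0) (x, y) \<and>
        (y0 \<ge> 1 \<and> y > 1 \<longrightarrow>
           1 / (C * (\<beta> - 1)) * \<bar>y0 powr (1 - \<beta>) - y powr (1 - \<beta>)\<bar> + dist x x0 / (C * y0 powr \<beta>)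
             \<le> d_rho \<beta> (x, y) (x0, y0) \<and>
           d_rho \<beta> (x, y) (x0, y0)
             \<le> C / (\<beta> - 1) * \<bar>y0 powr (1 - \<beta>) - y powr (1 - \<beta>)\<bar> + C / y0 powr \<beta> * dist x x0))"
proof -
  obtain c e where ce: "\<forall>u::'a. dist c u \<le> e"
    using compact_imp_bounded[OF assms(1)] unfolding bounded_def by blast
  have diam: "dist u v \<le> 2 * e" for u v :: 'a
    using dist_triangle3[of u v c] ce[rule_format, of u] ce[rule_format, of v] by linarith
  then have ball: "rho_ball \<beta> (2 * e) x0 x y0 y R"
    if "y0 \<ge> 0 \<and> R > 0 \<and> \<not> d_rho_inf \<beta> (x0, y0) < 2 * R" "y \<ge> 0 \<and> d_rho \<beta> (x0, y0) (x, y) < R"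
    for x0 x :: 'a and y0 y R
    using that assms(2,7) by unfold_locales auto
  show ?thesis
  proof (intro exI[of _ "ball_constant \<beta> (2 * e)"] conjI allI impI)
    show "ball_constant \<beta> (2 * e) > 0" using ball_constant_pos assms(7) diam[of c c] by simp
  qed (drule (1) ball, (elim conjE)?, erule rho_ball.weights_comparable rho_ball.d_rho_comparable
      rho_ball.d_rho_vertical_lower rho_ball.d_rho_vertical_upper; assumption)+
qed

end
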